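(* Let $Q$ be a nonzero quadratic form on $\mathbb{F}_{q_1}/\mathbb{F}_q$ with rank $r_Q$. (1) The code $\mathcal{C}_{Q,N}$ is a $[\frac{(q^M-1)(q-1)}{N},\,m(m_2+1)]_p$ linear code. If $r_Q$ is even, its weight distribution is: weight $0$ (frequency $1$); $\frac{(p-1)(q-1)}{pN}q^M$ (frequency $q(q^{m_2}-1)$); $\frac{(p-1)(q-1)}{pN}q^M(1-\epsilon q^{-r_Q/2})$ (frequency $q-1$). If $r_Q$ is odd, its weight distribution is: weight $0$ (frequency $1$); $\frac{(p-1)(q-1)}{pN}q^M$ (frequency $q^{m_2+1}-1$). (2) The code $\mathcal{C}_{Q,N}'$ is a $[\frac{q^M(q-1)}{N},\,m(m_2+2)]_p$ linear code. If $r_Q$ is even, its weight distribution is: weight $0$ (frequency $1$); $\frac{p-1}{pN}q^{M+1}$ (frequency $q-1$); $\frac{(q-1)(p-1)}{pN}q^M$ (frequency $q^2(q^{m_2}-1)$); $\frac{(q-1)(p-1)}{pN}q^M(1-\epsilon q^{-r_Q/2})$ (frequency $q-1$); $\frac{p-1}{pN}q^M(q-1+\epsilon q^{-r_Q/2})$ (frequency $(q-1)^2$). If $r_Q$ is odd, its weight distribution is: weight $0$ (frequency $1$); $\frac{p-1}{pN}q^{M+1}$ (frequency $q-1$); $\frac{(q-1)(p-1)}{pN}q^M$ (frequency $q^2(q^{m_2}-1)+q-1$); $\frac{p-1}{pN}q^M(q-1-\epsilon q^{(1-r_Q)/2})$ (frequency $\frac12(q-1)^2$); $\frac{p-1}{pN}q^M(q-1+\epsilon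 q^{(1-r_Q)/2})$ (frequency $\frac12(q-1)^2$).
   Context: Let $p$ be an odd prime, $m\ge1$, $q=p^m$. Let $m_1,m_2$ be positive integers, $M=m_1+m_2$, $q_i=q^{m_i}$, $\mathbb{F}=\mathbb{F}_{q_1}\times\mathbb{F}_{q_2}$, $\mathbb{F}^\star=\mathbb{F}\setminus\{(0,0)\}$. $\mathrm{Tr}_{q^s/q}$ is the trace $\mathbb{F}_{q^s}\to\mathbb{F}_q$; $\eta$ is the quadratic character of $\mathbb{F}_q$ with $\eta(0)=0$. A quadratic form $Q$ on $\mathbb{F}_{q_1}/\mathbb{F}_q$ is a map $Q:\mathbb{F}_{q_1}\to\mathbb{F}_q$ with $Q(ax)=a^2Q(x)$ ($a\in\mathbb{F}_q$) such that $B_Q(x,y)=\frac12(Q(x+y)-Q(x)-Q(y))$ is $\mathbb{F}_q$-bilinear; rank $r_Q=m_1-\dim_{\mathbb{F}_q}\{x:B_Q(x,y)=0\ \forall y\}$; in suitable coordinates $Q=\sum_{i=1}^{r_Q}\lambda_ix_i^2$, $\lambda_i\in\mathbb{F}_q^*$, $\varepsilon_Q=\eta(\lambda_1\cdots\lambda_{r_Q})$. $\epsilon=\varepsilon_Q(-1)^{(p-1)mr_Q/4}$ if $r_Q$ even, $\epsilon=\varepsilon_Q(-1)^{(p-1)m(r_Q+1)/4}$ if $r_Q$ odd. Let $\mathcal{C}_Q=\{(aQ(x)+\mathrm{Tr}_{q_2/q}(by))_{(x,y)\in\mathbb{F}^\star}:(a,b)\in\mathbb{F}_q\times\mathbb{F}_{q_2}\}$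 (length $q^M-1$) and $\mathcal{C}_Q'=\{(aQ(x)+\mathrm{Tr}_{q_2/q}(by)+c)_{(x,y)\in\mathbb{F}}:(a,b,c)\in\mathbb{F}_q\times\mathbb{F}_{q_2}\times\mathbb{F}_q\}$ (length $q^M$). Let $N$ be a positive divisor of $p-1$ with $\gcd(N,\frac{q-1}{p-1})=1$, $\theta$ a primitive $\frac{q-1}{N}$-th root of unity in $\mathbb{F}_q$, and for $\gamma\in\mathbb{F}_q$ let $\psi_\gamma=(\mathrm{Tr}_{q/p}(\gamma\theta^i))_{0\le i<\frac{q-1}{N}}\in\mathbb{F}_p^{(q-1)/N}$. For a code $\mathcal{D}\in\{\mathcal{C}_Q,\mathcal{C}_Q'\}$ of length $n$, its descended code is $\{(\psi_{c_1},\dots,\psi_{c_n}):(c_1,\dots,c_n)\in\mathcal{D}\}\subseteq\mathbb{F}_p^{n(q-1)/N}$ (concatenation); these are denoted $\mathcal{C}_{Q,N}$ and $\mathcal{C}_{Q,N}'$ respectively. *)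

theory Defs
  imports Complex_Main "HOL-Computational_Algebra.Primes" "HOL-Library.Multiset" "HOL-Library.FuncSet"
begin

text \<open>All finite fields are realised as subfields of one ambient finite field of type 'f.
  GF s is the subfield of order s, i.e. the set of roots of X^s - X.\<close>

definition GF :: "nat \<Rightarrow> 'f::field set" where
  "GF s = {x. x ^ s = x}"

definition tr :: "nat \<Rightarrow> nat \<Rightarrow> 'f::field \<Rightarrow> 'f" where
  "tr q s x = (\<Sum>i<s. x ^ (q ^ i))"

definition eta :: "nat \<Rightarrow> 'f::field \<Rightarrow> int" where
  "eta q a = (if a = 0 then 0 else if (\<exists>b\<in>GF q. b ^ 2 = a) then 1 else -1)"

definition qf_bilin :: "('f::field \<Rightarrow> 'f) \<Rightarrow> 'f \<Rightarrow> 'f \<Rightarrow> 'f" where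
  "qf_bilin Q x y = (Q (x + y) - Q x - Q y) / 2"

definition is_quadratic_form :: "nat \<Rightarrow> nat \<Rightarrow> ('f::field \<Rightarrow> 'f) \<Rightarrow> bool" where
  "is_quadratic_form q m1 Q \<longleftrightarrow>
     (\<forall>x\<in>GF (q ^ m1). Q x \<in> GF q) \<and>
     (\<forall>a\<in>GF q. \<forall>x\<in>GF (q ^ m1). Q (a * x) = a ^ 2 * Q x) \<and>
     (\<forall>a\<in>GF q. \<forall>b\<in>GF q. \<forall>x\<in>GF (q ^ m1). \<forall>x'\<in>GF (q ^ m1). \<forall>y\<in>GF (q ^ m1).
        qf_bilin Q (a * x + b * x') y = a * qf_bilin Q x y + b * qf_bilin Q x' y \<and>
        qf_bilin Q y (a * x + b * x') = a * qf_bilin Q y x + b * qf_bilin Q y x')"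

definition qf_radical :: "nat \<Rightarrow> nat \<Rightarrow> ('f::field \<Rightarrow> 'f) \<Rightarrow> 'f set" where
  "qf_radical q m1 Q = {x\<in>GF (q ^ m1). \<forall>y\<in>GF (q ^ m1). qf_bilin Q x y = 0}"

text \<open>Rank: m1 minus the GF q-dimension of the radical (a GF q-subspace, whose dimension d
  is determined by its cardinality q^d).\<close>
definition qf_rank :: "nat \<Rightarrow> nat \<Rightarrow> ('f::field \<Rightarrow> 'f) \<Rightarrow> nat" where
  "qf_rank q m1 Q = m1 - (THE d. card (qf_radical q m1 Q) = q ^ d)"

definition qf_diagonal :: "nat \<Rightarrow> nat \<Rightarrow> ('f::field \<Rightarrow> 'f) \<Rightarrow> (nat \<Rightarrow> 'f) \<Rightarrow> (nat \<Rightarrow> 'f) \<Rightarrow> nat \<Rightarrow> bool" where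
  "qf_diagonal q m1 Q e lam r \<longleftrightarrow>
     bij_betw (\<lambda>x. \<Sum>i<m1. x i * e i) (PiE {..<m1} (\<lambda>_. GF q)) (GF (q ^ m1)) \<and>
     (\<forall>i<r. lam i \<in> GF q - {0}) \<and>
     (\<forall>x\<in>PiE {..<m1} (\<lambda>_. GF q). Q (\<Sum>i<m1. x i * e i) = (\<Sum>i<r. lam i * (x i) ^ 2))"

text \<open>psi_gamma = (Tr_{q/p}(gamma theta^i))_{0 <= i < (q-1)/N}; a descended codeword is indexed by
  pairs (position of the original code, i).\<close>
definition psi :: "nat \<Rightarrow> nat \<Rightarrow> nat \<Rightarrow> nat \<Rightarrow> 'f::field \<Rightarrow> 'f \<Rightarrow> nat \<Rightarrow> 'f" where
  "psi p m q N \<theta> \<gamma> i = (if i < (q - 1) div N then tr p m (\<gamma> * \<theta> ^ i) else 0)"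

definition pos_C :: "nat \<Rightarrow> nat \<Rightarrow> nat \<Rightarrow> nat \<Rightarrow> (('f::field \<times> 'f) \<times> nat) set" where
  "pos_C q m1 m2 N = ((GF (q ^ m1) \<times> GF (q ^ m2)) - {(0, 0)}) \<times> {..< (q - 1) div N}"

definition pos_C' :: "nat \<Rightarrow> nat \<Rightarrow> nat \<Rightarrow> nat \<Rightarrow> (('f::field \<times> 'f) \<times> nat) set" where
  "pos_C' q m1 m2 N = (GF (q ^ m1) \<times> GF (q ^ m2)) \<times> {..< (q - 1) div N}"

definition code_C :: "nat \<Rightarrow> nat \<Rightarrow> nat \<Rightarrow> nat \<Rightarrow> nat \<Rightarrow> nat \<Rightarrow> 'f::field \<Rightarrow> ('f \<Rightarrow> 'f)
    \<Rightarrow> ((('f \<times> 'f) \<times> nat) \<Rightarrow> 'f) set" where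
  "code_C p m q m1 m2 N \<theta> Q =
     (\<lambda>(a, b). \<lambda>((x, y), i). if ((x, y), i) \<in> pos_C q m1 m2 N
        then psi p m q N \<theta> (a * Q x + tr q m2 (b * y)) i else 0)
     ` (GF q \<times> GF (q ^ m2))"

definition code_C' :: "nat \<Rightarrow> nat \<Rightarrow> nat \<Rightarrow> nat \<Rightarrow> nat \<Rightarrow> nat \<Rightarrow> 'f::field \<Rightarrow> ('f \<Rightarrow> 'f)
    \<Rightarrow> ((('f \<times> 'f) \<times> nat) \<Rightarrow> 'f) set" where
  "code_C' p m q m1 m2 N \<theta> Q =
     (\<lambda>(a, b, c). \<lambda>((x, y), i). if ((x, y), i) \<in> pos_C' q m1 m2 N
        then psi p m q N \<theta> (a * Q x + tr q m2 (b * y) + c) i else 0)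
     ` (GF q \<times> GF (q ^ m2) \<times> GF q)"

definition linear_code :: "nat \<Rightarrow> 'j set \<Rightarrow> nat \<Rightarrow> nat \<Rightarrow> ('j \<Rightarrow> 'f::field) set \<Rightarrow> bool" where
  "linear_code p Pos n k C \<longleftrightarrow>
     finite Pos \<and> card Pos = n \<and>
     C \<subseteq> {c. (\<forall>j\<in>Pos. c j \<in> GF p) \<and> (\<forall>j. j \<notin> Pos \<longrightarrow> c j = 0)} \<and>
     (\<lambda>_. 0) \<in> C \<and>
     (\<forall>c\<in>C. \<forall>d\<in>C. (\<lambda>j. c j + d j) \<in> C) \<and>
     (\<forall>a\<in>GF p. \<forall>c\<in>C. (\<lambda>j. a * c j) \<in> C) \<and>
     card C = p ^ k"

definition hweight :: "'j set \<Rightarrow> ('j \<Rightarrow> 'f::zero) \<Rightarrow> nat" where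
  "hweight Pos c = card {j\<in>Pos. c j \<noteq> 0}"

definition weight_distr :: "'j set \<Rightarrow> ('j \<Rightarrow> 'f::zero) set \<Rightarrow> real multiset" where
  "weight_distr Pos C = image_mset (\<lambda>c. real (hweight Pos c)) (mset_set C)"

end

(* Each nonzero coordinate gamma of a word over GF q descends to a block psi_gamma with exactly
   (p - 1) q / (p N) nonzero entries, independently of gamma: GF(q)^* is covered by the products
   a theta^i with a in GF(p)^*, each element exactly (p - 1) / N times (this is where
   gcd (N, (q - 1) / (p - 1)) = 1 is used), and tr (g z) vanishes for exactly q / p values of z.
   Hence descending is an injective GF(p)-linear map that multiplies all weights by the same
   factor, and the weight distributions follow from those of the codes over GF q.  There the weight
   of x, y |-> a Q(x) + Tr(b y) + c is q^(m1+m2) minus its number of zeros, which is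
   q^(m1+m2-1) for b /= 0 and otherwise q^m2 times the number of solutions of Q(x) = -c/a.  In
   diagonal coordinates the latter is the classical count of solutions of a diagonal quadratic
   equation (Lidl and Niederreiter, Theorems 6.26 and 6.27), obtained by induction on the number
   of variables from a Jacobi sum of the quadratic character. *)

theory Submission
  imports Defs "HOL-Computational_Algebra.Polynomial"
begin

lemma card_eq_card_image_mult_fibre:
  assumes "finite G" and "\<And>y. y \<in> T ` G \<Longrightarrow> card {x\<in>G. T x = y} = c"
  shows "card G = card (T ` G) * c"
proof -
  have "card G = (\<Sum>y\<in>T ` G. card {x\<in>G. T x = y})"
    using sum.group[OF assms(1) finite_imageI[OF assms(1)] subset_refl, where g = T and h = "\<lambda>_. 1::nat"]
    by simp
  also have "\<dots> = card (T ` G) * c" using assms(2) by simp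
  finally show ?thesis .
qed

lemma uniform_fibres_bound_imp_surj:
  assumes "finite G" and "finite S" and "T ` G \<subseteq> S"
    and "\<And>y. y \<in> T ` G \<Longrightarrow> card {x\<in>G. T x = y} = c"
    and "card G = card S * k" and "c \<le> k" and "G \<noteq> {}"
  shows "c = k \<and> T ` G = S"
proof -
  have G: "card G = card (T ` G) * c" by (rule card_eq_card_image_mult_fibre) (use assms in auto)
  have "card (T ` G) \<le> card S" using card_mono[OF assms(2,3)] .
  then have "card G \<le> card S * c" using G by simp
  moreover have "card G > 0" using assms(1,7) by (simp add: card_gt_0_iff)
  ultimately have ck: "c = k" using assms(5,6) by (auto intro: le_antisym)
  then have "card (T ` G) = card S" using G assms(5) \<open>card G > 0\<close> by simp
  then show ?thesis using ck card_subset_eq[OF assms(2,3)] by simp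
qed

lemma card_fibre_add_hom:
  fixes T :: "'a::ab_group_add \<Rightarrow> 'b::ab_group_add"
  assumes add: "\<And>x y. x \<in> G \<Longrightarrow> y \<in> G \<Longrightarrow> x + y \<in> G"
    and diff: "\<And>x y. x \<in> G \<Longrightarrow> y \<in> G \<Longrightarrow> x - y \<in> G"
    and hom: "\<And>x y. x \<in> G \<Longrightarrow> y \<in> G \<Longrightarrow> T (x + y) = T x + T y"
    and y: "y \<in> T ` G"
  shows "card {x\<in>G. T x = y} = card {x\<in>G. T x = 0}"
proof -
  obtain x0 where x0: "x0 \<in> G" "y = T x0" using y by auto
  have "{x\<in>G. T x = y} = (\<lambda>z. x0 + z) ` {x\<in>G. T x = 0}"
  proof (intro equalityI subsetI)
    fix x assume x: "x \<in> {x\<in>G. T x = y}"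
    then have x: "x \<in> G" "T x = T x0" using x0 by auto
    have z: "x - x0 \<in> G" using diff[OF x(1) x0(1)] .
    have "T x = T x0 + T (x - x0)" using hom[OF x0(1) z] by simp
    then have "T (x - x0) = 0" using x(2) by simp
    then show "x \<in> (\<lambda>z. x0 + z) ` {x\<in>G. T x = 0}"
      using z by (intro image_eqI[of _ _ "x - x0"]) auto
  next
    fix x assume "x \<in> (\<lambda>z. x0 + z) ` {x\<in>G. T x = 0}"
    then obtain z where z: "z \<in> G" "T z = 0" "x = x0 + z" by auto
    then show "x \<in> {x\<in>G. T x = y}" using add[OF x0(1) z(1)] hom[OF x0(1) z(1)] x0 by simp
  qed
  also have "card \<dots> = card {x\<in>G. T x = 0}" by (rule card_image) (simp add: inj_on_def)
  finally show ?thesis .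
qed

lemma card_fibre_mult_hom:
  fixes T :: "'a::field \<Rightarrow> 'b::field"
  assumes "0 \<notin> G" and mult: "\<And>x y. x \<in> G \<Longrightarrow> y \<in> G \<Longrightarrow> x * y \<in> G"
    and inv: "\<And>x. x \<in> G \<Longrightarrow> inverse x \<in> G"
    and hom: "\<And>x y. x \<in> G \<Longrightarrow> y \<in> G \<Longrightarrow> T (x * y) = T x * T y"
    and nz: "\<And>x. x \<in> G \<Longrightarrow> T x \<noteq> 0" and y: "y \<in> T ` G"
  shows "card {x\<in>G. T x = y} = card {x\<in>G. T x = 1}"
proof -
  obtain x0 where x0: "x0 \<in> G" "y = T x0" using y by auto
  have x0_nz: "x0 \<noteq> 0" using assms(1) x0 by auto
  have "{x\<in>G. T x = y} = (\<lambda>z. x0 * z) ` {x\<in>G. T x = 1}"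
  proof (intro equalityI subsetI)
    fix x assume "x \<in> {x\<in>G. T x = y}"
    then have x: "x \<in> G" "T x = T x0" using x0 by auto
    have z: "x / x0 \<in> G" using mult[OF x(1) inv[OF x0(1)]] by (simp add: divide_inverse)
    have "T x = T x0 * T (x / x0)" using hom[OF x0(1) z] x0_nz by simp
    then have "T (x / x0) = 1" using x(2) nz[OF x0(1)] by simp
    then show "x \<in> (\<lambda>z. x0 * z) ` {x\<in>G. T x = 1}"
      using z x0_nz by (intro image_eqI[of _ _ "x / x0"]) auto
  next
    fix x assume "x \<in> (\<lambda>z. x0 * z) ` {x\<in>G. T x = 1}"
    then obtain z where z: "z \<in> G" "T z = 1" "x = x0 * z" by auto
    then show "x \<in> {x\<in>G. T x = y}" using mult[OF x0(1) z(1)] hom[OF x0(1) z(1)] x0 by simp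
  qed
  also have "card \<dots> = card {x\<in>G. T x = 1}"
    by (rule card_image) (use x0_nz in \<open>simp add: inj_on_def\<close>)
  finally show ?thesis .
qed

lemma card_roots_le_degree:
  fixes P :: "'a::idom poly"
  assumes "P \<noteq> 0" and "degree P \<le> d"
  shows "card {x. poly P x = 0} \<le> d"
  using card_poly_roots_bound[OF assms(1)] assms(2) by simp

lemma power_gcd_eq_1:
  fixes x :: "'a::field"
  assumes "x ^ a = 1" and "x ^ b = 1" and "a \<noteq> 0"
  shows "x ^ gcd a b = 1"
proof -
  obtain u v where uv: "a * u = b * v + gcd a b" using bezout_nat[OF assms(3)] by blast
  have "1 = x ^ (a * u)" using assms(1) by (simp add: power_mult)
  also have "\<dots> = x ^ (b * v) * x ^ gcd a b" using uv by (simp add: power_add)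
  also have "x ^ (b * v) = 1" using assms(2) by (simp add: power_mult)
  finally show ?thesis by simp
qed

lemma image_mset_mset_set_const:
  assumes "\<And>x. x \<in> A \<Longrightarrow> f x = v"
  shows "image_mset f (mset_set A) = replicate_mset (card A) v"
proof (cases "finite A")
  case True
  then have "image_mset f (mset_set A) = image_mset (\<lambda>_. v) (mset_set A)"
    using assms by (intro image_mset_cong) auto
  then show ?thesis by (simp add: image_mset_const_eq)
qed simp

lemma image_mset_mset_set_block:
  assumes "A = B \<union> C" and "finite B" and "finite C" and "B \<inter> C = {}"
    and "\<And>x. x \<in> B \<Longrightarrow> f x = v"
  shows "image_mset f (mset_set A) = replicate_mset (card B) v + image_mset f (mset_set C)"
  using assms by (simp add: mset_set_Union image_mset_mset_set_const)

lemma even_half_pred_power: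
  fixes p :: nat
  assumes "odd p"
  shows "even ((p ^ m - 1) div 2 + (p - 1) div 2 * m)"
proof (induction m)
  case 0 then show ?case by simp
next
  case (Suc m)
  obtain h where h: "p = 2 * h + 1" using assms oddE by blast
  obtain A where A: "p ^ m = 2 * A + 1" using assms oddE[of "p ^ m"] by auto
  have "even (A + h * m)" using Suc.IH A h by simp
  moreover have "(p ^ Suc m - 1) div 2 = p * A + h" using A h by (simp add: algebra_simps)
  moreover have "p * A + h + h * Suc m = 2 * (h * A + h) + (A + h * m)" using h by (simp add: algebra_simps)
  ultimately show ?case using h by simp
qed

section \<open>Finite fields of odd characteristic\<close>

locale odd_char_finite_field =
  fixes p L :: nat and TY :: "'f::{field,finite} itself"
  assumes p_prime: "prime p" and p_odd: "odd p"
    and card_UNIV: "card (UNIV :: 'f set) = p ^ L"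
begin

lemma p_ge_2: "p \<ge> 2"
  using p_prime prime_ge_2_nat by blast

lemma of_nat_card_UNIV: "of_nat (card (UNIV :: 'f set)) = (0::'f)"
proof -
  have "(\<Sum>g\<in>(UNIV::'f set). g + 1) = (\<Sum>g\<in>UNIV. g)"
    by (rule sum.reindex_bij_witness[of _ "\<lambda>g. g - 1" "\<lambda>g. g + 1"]) auto
  then show ?thesis by (simp add: sum.distrib)
qed

lemma exponent_pos: "L \<ge> 1"
proof (rule ccontr)
  assume "\<not> L \<ge> 1"
  then have "card (UNIV :: 'f set) = 1" using card_UNIV by simp
  then obtain a where "(UNIV :: 'f set) = {a}" by (meson card_1_singletonE)
  then have "(0::'f) = 1" by (metis UNIV_I singletonD)
  then show False by simp
qed

lemma CHAR_eq_p: "CHAR('f) = p"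
proof -
  have prime: "prime CHAR('f)" by (simp add: prime_CHAR_semidom finite_imp_CHAR_pos)
  have "of_nat (p ^ L) = (0::'f)" using of_nat_card_UNIV card_UNIV by simp
  then have "CHAR('f) dvd p ^ L" by (simp only: of_nat_eq_0_iff_char_dvd)
  then have "CHAR('f) dvd p" using prime prime_dvd_power by blast
  then show ?thesis using prime p_prime primes_dvd_imp_eq by blast
qed

lemma two_neq_zero: "(2::'f) \<noteq> 0"
proof
  assume "(2::'f) = 0"
  then have "of_nat 2 = (0::'f)" by simp
  then have "p dvd 2" using CHAR_eq_p by (simp only: of_nat_eq_0_iff_char_dvd)
  then show False using p_odd p_ge_2 by (auto dest: dvd_imp_le)
qed

lemma one_neq_minus_one: "(1::'f) \<noteq> -1"
proof
  assume "(1::'f) = -1"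
  then have "(2::'f) = 0" by (metis add.right_inverse one_add_one)
  then show False using two_neq_zero by simp
qed

lemma frobenius_add: "((x::'f) + y) ^ (p ^ k) = x ^ (p ^ k) + y ^ (p ^ k)"
  using freshmans_dream'[of "p ^ k" k x y] CHAR_eq_p p_prime by simp

lemma frobenius_sum: "(\<Sum>i\<in>A. (f i :: 'f)) ^ (p ^ k) = (\<Sum>i\<in>A. f i ^ (p ^ k))"
  using freshmans_dream_sum'[of "p ^ k" k f A] CHAR_eq_p p_prime by simp

lemma frobenius_uminus: "(- (x::'f)) ^ (p ^ k) = - (x ^ (p ^ k))"
  using p_odd by (simp add: power_minus_odd)

lemma frobenius_diff: "((x::'f) - y) ^ (p ^ k) = x ^ (p ^ k) - y ^ (p ^ k)"
  using frobenius_add[of x "- y" k] frobenius_uminus[of y k] by simp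

lemma power_card_UNIV: "(x::'f) ^ (p ^ L) = x"
proof (cases "x = 0")
  case True then show ?thesis using exponent_pos p_ge_2 by simp
next
  case False
  have "x * (\<Prod>y\<in>UNIV-{0}. x * y) = x * x ^ (card (UNIV :: 'f set) - 1) * \<Prod>(UNIV-{0})"
    by (simp add: prod.distrib mult_ac)
  also have "x * x ^ (card (UNIV :: 'f set) - 1) = x ^ card (UNIV :: 'f set)"
    using finite_UNIV_card_ge_0[where ?'a = 'f] by (simp add: power_eq_if)
  also have "(\<Prod>y\<in>UNIV-{0}. x * y) = (\<Prod>y\<in>UNIV-{0}. y)"
    by (rule prod.reindex_bij_witness[of _ "\<lambda>y. y / x" "\<lambda>y. x * y"]) (use False in auto)
  finally show ?thesis using card_UNIV by simp
qed

lemma GF_UNIV: "GF (p ^ L) = (UNIV :: 'f set)"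
  unfolding GF_def using power_card_UNIV by auto

lemma GF_power_iterate: "(x::'f) \<in> GF n \<Longrightarrow> x ^ (n ^ j) = x"
  unfolding GF_def by (induction j) (simp_all add: power_mult)

lemma GF_subset_GF_power: "GF n \<subseteq> (GF (n ^ j) :: 'f set)"
  using GF_power_iterate[of _ n j] unfolding GF_def by auto

lemma GF_zero [simp]: "(0::'f) \<in> GF (p ^ k)"
  unfolding GF_def using p_ge_2 by simp

lemma GF_one [simp]: "(1::'f) \<in> GF n"
  unfolding GF_def by simp

lemma GF_add: "x \<in> GF (p ^ k) \<Longrightarrow> y \<in> GF (p ^ k) \<Longrightarrow> (x::'f) + y \<in> GF (p ^ k)"
  unfolding GF_def by (simp add: frobenius_add)

lemma GF_uminus: "x \<in> GF (p ^ k) \<Longrightarrow> - (x::'f) \<in> GF (p ^ k)"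
  unfolding GF_def by (simp add: frobenius_uminus)

lemma GF_diff: "x \<in> GF (p ^ k) \<Longrightarrow> y \<in> GF (p ^ k) \<Longrightarrow> (x::'f) - y \<in> GF (p ^ k)"
  unfolding GF_def by (simp add: frobenius_diff)

lemma GF_mult: "x \<in> GF n \<Longrightarrow> y \<in> GF n \<Longrightarrow> (x::'f) * y \<in> GF n"
  unfolding GF_def by (simp add: power_mult_distrib)

lemma GF_inverse: "x \<in> GF n \<Longrightarrow> inverse (x::'f) \<in> GF n"
  unfolding GF_def by (simp add: power_inverse)

lemma GF_divide: "x \<in> GF n \<Longrightarrow> y \<in> GF n \<Longrightarrow> (x::'f) / y \<in> GF n"
  by (simp add: divide_inverse GF_mult GF_inverse)

lemma GF_power: "x \<in> GF n \<Longrightarrow> (x::'f) ^ j \<in> GF n"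
proof -
  assume "x \<in> GF n"
  then have "(x ^ n) ^ j = x ^ j" by (simp add: GF_def)
  then show ?thesis by (simp add: GF_def power_mult[symmetric] mult.commute)
qed

lemma GF_sum: "(\<And>i. i \<in> A \<Longrightarrow> f i \<in> GF (p ^ k)) \<Longrightarrow> (\<Sum>i\<in>A. (f i :: 'f)) \<in> GF (p ^ k)"
  by (induction A rule: infinite_finite_induct) (auto intro: GF_add)

lemma GF_prod: "(\<And>i. i \<in> A \<Longrightarrow> f i \<in> GF n) \<Longrightarrow> (\<Prod>i\<in>A. (f i :: 'f)) \<in> GF n"
  by (induction A rule: infinite_finite_induct) (auto intro: GF_mult)

lemma GF_minus_one_power: "(-1::'f) ^ j \<in> GF (p ^ k)"
  by (intro GF_power GF_uminus GF_one)

lemma p_power_ge_2: "k \<ge> 1 \<Longrightarrow> p ^ k \<ge> 2"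
  using p_ge_2 power_increasing[of 1 k p] by simp

lemma card_roots_of_unity_le:
  assumes "n \<ge> 1"
  shows "card {x::'f. x ^ n = 1} \<le> n"
proof -
  let ?P = "monom (1::'f) n - 1"
  have "coeff ?P n = 1" using assms by (simp add: coeff_monom)
  then have "?P \<noteq> 0" by (metis coeff_0 zero_neq_one)
  moreover have "degree ?P \<le> n" by (simp add: degree_diff_le degree_monom_le)
  moreover have "{x::'f. x ^ n = 1} = {x. poly ?P x = 0}" by (auto simp: poly_monom)
  ultimately show ?thesis using card_roots_le_degree by metis
qed

lemma card_GF_le:
  assumes "k \<ge> 1"
  shows "card (GF (p ^ k) :: 'f set) \<le> p ^ k"
proof -
  let ?n = "p ^ k"
  let ?P = "monom (1::'f) ?n - monom 1 1"
  have n: "?n \<ge> 2" using p_power_ge_2[OF assms] .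
  then have "coeff ?P ?n = 1" by (simp add: coeff_monom)
  then have "?P \<noteq> 0" by (metis coeff_0 zero_neq_one)
  moreover have "degree ?P \<le> ?n" using n
    by (intro degree_diff_le) (auto intro: order.trans[OF degree_monom_le])
  moreover have "GF ?n = {x::'f. poly ?P x = 0}" by (auto simp: GF_def poly_monom)
  ultimately show ?thesis using card_roots_le_degree by metis
qed

lemma tr_zero [simp]: "n > 0 \<Longrightarrow> tr n s (0::'f) = 0"
  unfolding tr_def by (simp add: power_0_left)

lemma tr_add: "tr (p ^ k) s ((x::'f) + y) = tr (p ^ k) s x + tr (p ^ k) s y"
  unfolding tr_def by (simp add: power_mult[symmetric] frobenius_add sum.distrib)

lemma tr_diff: "tr (p ^ k) s ((x::'f) - y) = tr (p ^ k) s x - tr (p ^ k) s y"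
  using tr_add[of k s "x - y" y] by simp

lemma tr_smult: "a \<in> GF n \<Longrightarrow> tr n s ((a::'f) * x) = a * tr n s x"
  unfolding tr_def by (simp add: power_mult_distrib GF_power_iterate sum_distrib_left)

lemma tr_in_GF:
  assumes "(x::'f) \<in> GF ((p ^ k) ^ s)"
  shows "tr (p ^ k) s x \<in> GF (p ^ k)"
proof -
  let ?f = "\<lambda>i. x ^ ((p ^ k) ^ i)"
  have "tr (p ^ k) s x ^ (p ^ k) = (\<Sum>i<s. ?f (Suc i))"
    unfolding tr_def frobenius_sum by (simp add: power_mult[symmetric] mult.commute)
  also have "\<dots> = (\<Sum>i<s. ?f i)"
    using sum.lessThan_Suc_shift[of ?f s] assms by (simp add: GF_def)
  finally show ?thesis unfolding GF_def tr_def by simp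
qed

lemma card_tr_kernel_le:
  assumes k: "k \<ge> 1" and s: "s \<ge> 1"
  shows "card {x::'f. tr (p ^ k) s x = 0} \<le> (p ^ k) ^ (s - 1)"
proof -
  let ?q = "p ^ k"
  let ?P = "\<Sum>i<s. monom (1::'f) (?q ^ i)"
  have q: "?q \<ge> 2" using p_power_ge_2[OF k] .
  have "coeff ?P (?q ^ (s - 1)) = (\<Sum>i<s. if i = s - 1 then 1 else 0)"
    using q by (simp add: coeff_sum coeff_monom power_inject_exp eq_commute)
  also have "\<dots> = 1" using s by simp
  finally have "?P \<noteq> 0" by (metis coeff_0 zero_neq_one)
  moreover have "degree ?P \<le> ?q ^ (s - 1)"
  proof (intro degree_sum_le)
    fix i assume "i \<in> {..<s}"
    then have "?q ^ i \<le> ?q ^ (s - 1)" using q by (intro power_increasing) auto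
    then show "degree (monom (1::'f) (?q ^ i)) \<le> ?q ^ (s - 1)"
      using degree_monom_le order.trans by blast
  qed simp
  moreover have "{x::'f. tr ?q s x = 0} = {x. poly ?P x = 0}"
    by (simp add: tr_def poly_sum poly_monom)
  ultimately show ?thesis using card_roots_le_degree by metis
qed

text \<open>The trace onto GF (p ^ k) is additive and its kernel has at most (p ^ k) ^ (s - 1) elements,
  so its image, which lies in GF (p ^ k), has at least p ^ k elements.\<close>

lemma card_GF:
  assumes "k dvd L"
  shows "card (GF (p ^ k) :: 'f set) = p ^ k"
proof -
  obtain s where s: "L = k * s" using assms by auto
  have k: "k \<ge> 1" and s1: "s \<ge> 1" using s exponent_pos by (auto simp: Suc_le_eq)
  let ?T = "tr (p ^ k) s :: 'f \<Rightarrow> 'f"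
  have "card {x\<in>UNIV. ?T x = y} = card {x\<in>UNIV. ?T x = 0}" if "y \<in> ?T ` UNIV" for y
    by (rule card_fibre_add_hom[OF _ _ tr_add that]) auto
  then have "card (UNIV::'f set) = card (?T ` UNIV) * card {x\<in>UNIV. ?T x = 0}"
    by (intro card_eq_card_image_mult_fibre) auto
  also have "\<dots> \<le> card (?T ` UNIV) * (p ^ k) ^ (s - 1)"
    using card_tr_kernel_le[OF k s1] by simp
  finally have "(p ^ k) ^ s \<le> card (?T ` UNIV) * (p ^ k) ^ (s - 1)"
    using s card_UNIV by (simp add: power_mult)
  moreover have "(p ^ k) ^ s = p ^ k * (p ^ k) ^ (s - 1)" using s1 by (cases s) auto
  ultimately have "p ^ k \<le> card (?T ` UNIV)" using p_ge_2 by (simp add: mult_le_cancel2)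
  also have "\<dots> \<le> card (GF (p ^ k) :: 'f set)"
    using tr_in_GF GF_UNIV s by (intro card_mono) (auto simp: power_mult)
  finally show ?thesis using card_GF_le[OF k] by simp
qed

lemma card_tr_fibre:
  assumes k: "k \<ge> 1" and s: "s \<ge> 1" and dvd: "k * s dvd L" and y: "y \<in> GF (p ^ k)"
  shows "card {x\<in>GF ((p ^ k) ^ s). tr (p ^ k) s x = (y::'f)} = (p ^ k) ^ (s - 1)"
proof -
  let ?T = "tr (p ^ k) s :: 'f \<Rightarrow> 'f"
  let ?G = "GF ((p ^ k) ^ s) :: 'f set"
  have G: "?G = GF (p ^ (k * s))" by (simp add: power_mult)
  have "p ^ k * (p ^ k) ^ (s - 1) = p ^ (k * s)"
    using s by (cases s) (auto simp: power_mult power_add)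
  then have "card ?G = card (GF (p ^ k) :: 'f set) * (p ^ k) ^ (s - 1)"
    using card_GF[OF dvd] card_GF[OF dvd_mult_left[OF dvd]] G by simp
  moreover have fibre: "card {x\<in>?G. ?T x = z} = card {x\<in>?G. ?T x = 0}" if "z \<in> ?T ` ?G" for z
    using card_fibre_add_hom[OF _ _ tr_add that] G by (simp add: GF_add GF_diff)
  moreover have "card {x\<in>?G. ?T x = 0} \<le> (p ^ k) ^ (s - 1)"
    by (rule order_trans[OF card_mono card_tr_kernel_le[OF k s]]) auto
  moreover have "?T ` ?G \<subseteq> GF (p ^ k)" using tr_in_GF by auto
  moreover have "?G \<noteq> {}" using G GF_zero[of "k * s"] by blast
  ultimately have "card {x\<in>?G. ?T x = 0} = (p ^ k) ^ (s - 1) \<and> ?T ` ?G = GF (p ^ k)"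
    by (intro uniform_fibres_bound_imp_surj) auto
  then show ?thesis using fibre y by auto
qed

end

section \<open>The quadratic character\<close>

locale subfield_q = odd_char_finite_field p L TY for p L :: nat and TY :: "'f::{field,finite} itself" +
  fixes m :: nat
  assumes m_pos: "m \<ge> 1" and m_dvd: "m dvd L"
begin

abbreviation "q \<equiv> p ^ m"

definition GFq_star :: "'f set" where "GFq_star = GF q - {0}"

definition nonzero_squares :: "'f set" where "nonzero_squares = (\<lambda>x. x ^ 2) ` GFq_star"

lemma q_ge_3: "q \<ge> 3"
proof -
  have "q \<ge> 2" using p_power_ge_2[OF m_pos] .
  moreover have "odd q" using p_odd by simp
  ultimately show ?thesis by presburger
qed

lemma card_GF_q: "card (GF q :: 'f set) = q"
  using card_GF[OF m_dvd] .

lemma card_GFq_star: "card GFq_star = q - 1"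
  unfolding GFq_star_def using card_GF_q by (simp add: card_Diff_singleton)

lemma GFq_star_mult: "x \<in> GFq_star \<Longrightarrow> y \<in> GFq_star \<Longrightarrow> x * y \<in> GFq_star"
  unfolding GFq_star_def by (auto intro: GF_mult)

lemma GFq_star_inverse: "x \<in> GFq_star \<Longrightarrow> inverse x \<in> GFq_star"
  unfolding GFq_star_def by (auto intro: GF_inverse)

lemma GFq_star_power_q_minus_1: "a \<in> GFq_star \<Longrightarrow> a ^ (q - 1) = 1"
proof -
  assume a: "a \<in> GFq_star"
  then have "a ^ q = a" "a \<noteq> 0" by (auto simp: GFq_star_def GF_def)
  moreover have "q = Suc (q - 1)" using q_ge_3 by simp
  ultimately have "a * a ^ (q - 1) = a * 1" by (metis power_Suc mult_1_right)
  then show ?thesis using \<open>a \<noteq> 0\<close> by simp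
qed

lemma card_roots_of_unity:
  assumes "d dvd q - 1" and "d \<ge> 1"
  shows "card {x::'f. x ^ d = 1} = d"
proof -
  obtain e where e: "q - 1 = d * e" using assms by auto
  have e1: "e \<ge> 1" using e q_ge_3 by (cases e) auto
  let ?T = "\<lambda>x::'f. x ^ e"
  have "card {x\<in>GFq_star. ?T x = y} = card {x\<in>GFq_star. ?T x = 1}" if "y \<in> ?T ` GFq_star" for y
    by (rule card_fibre_mult_hom[OF _ GFq_star_mult GFq_star_inverse _ _ that])
      (auto simp: GFq_star_def power_mult_distrib)
  then have "card GFq_star = card (?T ` GFq_star) * card {x\<in>GFq_star. ?T x = 1}"
    by (intro card_eq_card_image_mult_fibre) auto
  moreover have "card {x\<in>GFq_star. ?T x = 1} \<le> e"
    by (rule order_trans[OF card_mono card_roots_of_unity_le[OF e1]]) auto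
  ultimately have "d * e \<le> card (?T ` GFq_star) * e"
    using e card_GFq_star by (metis mult_le_mono2)
  then have "d \<le> card (?T ` GFq_star)" using e1 by simp
  also have "\<dots> \<le> card {x::'f. x ^ d = 1}"
  proof (intro card_mono subsetI)
    fix y assume "y \<in> ?T ` GFq_star"
    then obtain x where "x \<in> GFq_star" "y = x ^ e" by auto
    then show "y \<in> {x. x ^ d = 1}"
      using e GFq_star_power_q_minus_1 by (simp add: power_mult[symmetric] mult.commute)
  qed simp
  finally show ?thesis using card_roots_of_unity_le[OF assms(2)] by simp
qed

lemma card_nonzero_squares: "card nonzero_squares * 2 = q - 1"
proof -
  let ?T = "\<lambda>x::'f. x ^ 2"
  have "card {x\<in>GFq_star. ?T x = y} = card {x\<in>GFq_star. ?T x = 1}" if "y \<in> ?T ` GFq_star" for y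
    by (rule card_fibre_mult_hom[OF _ GFq_star_mult GFq_star_inverse _ _ that])
      (auto simp: GFq_star_def power_mult_distrib)
  then have "card GFq_star = card (?T ` GFq_star) * card {x\<in>GFq_star. ?T x = 1}"
    by (intro card_eq_card_image_mult_fibre) auto
  moreover have "{x\<in>GFq_star. ?T x = 1} = {1, -1}"
    unfolding GFq_star_def by (auto simp: power2_eq_1_iff intro: GF_uminus)
  ultimately show ?thesis
    using card_GFq_star one_neq_minus_one unfolding nonzero_squares_def by simp
qed

lemma nonzero_squares_subset: "nonzero_squares \<subseteq> GFq_star"
  unfolding nonzero_squares_def GFq_star_def by (auto intro: GF_power)

lemma two_mult_half_q_minus_1: "2 * ((q - 1) div 2) = q - 1"
proof -
  have "odd q" using p_odd by simp
  then show ?thesis using q_ge_3 by presburger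
qed

lemma euler_criterion:
  "a ^ ((q - 1) div 2) = 1 \<longleftrightarrow> a \<in> nonzero_squares"
proof -
  let ?R = "{x::'f. x ^ ((q - 1) div 2) = 1}"
  have sub: "nonzero_squares \<subseteq> ?R"
    using GFq_star_power_q_minus_1 two_mult_half_q_minus_1
    by (auto simp: nonzero_squares_def power_mult[symmetric])
  have "(q - 1) div 2 \<ge> 1" using q_ge_3 by simp
  then have "card ?R \<le> card nonzero_squares"
    using card_roots_of_unity_le[of "(q - 1) div 2"] card_nonzero_squares by simp
  moreover have "card nonzero_squares \<le> card ?R" using sub by (intro card_mono) auto
  ultimately have "nonzero_squares = ?R" using sub by (intro card_subset_eq) auto
  then show ?thesis by blast
qed

lemma eta_def_GF_q:
  "a \<in> GF q \<Longrightarrow> eta q a = (if a = 0 then 0 else if a \<in> nonzero_squares then 1 else -1)"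
  unfolding eta_def nonzero_squares_def GFq_star_def by auto

lemma of_int_eta:
  assumes a: "a \<in> GF q"
  shows "of_int (eta q a) = (a::'f) ^ ((q - 1) div 2)"
proof (cases "a = 0")
  case True then show ?thesis using q_ge_3 by (simp add: eta_def)
next
  case False
  then have star: "a \<in> GFq_star" using a by (simp add: GFq_star_def)
  have "(a ^ ((q - 1) div 2)) ^ 2 = 1"
    using GFq_star_power_q_minus_1[OF star] two_mult_half_q_minus_1
    by (simp add: power_mult[symmetric] mult.commute)
  then have "a ^ ((q - 1) div 2) = 1 \<or> a ^ ((q - 1) div 2) = -1" by (simp add: power2_eq_1_iff)
  then show ?thesis using euler_criterion[of a] eta_def_GF_q[OF a] False by auto
qed

lemma of_int_inj_on_signs:
  assumes "x \<in> {-1, 0, 1}" and "y \<in> {-1, 0, 1}" and "(of_int x :: 'f) = of_int y"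
  shows "x = y"
  using assms one_neq_minus_one one_neq_minus_one[symmetric] by auto

lemma eta_range: "eta q a \<in> {-1, 0, 1}"
  unfolding eta_def by auto

lemma eta_mult:
  assumes "a \<in> GF q" and "b \<in> GF q"
  shows "eta q ((a::'f) * b) = eta q a * eta q b"
proof (rule of_int_inj_on_signs)
  show "eta q a * eta q b \<in> {-1, 0, 1}" using eta_range[of a] eta_range[of b] by auto
  show "(of_int (eta q (a * b)) :: 'f) = of_int (eta q a * eta q b)"
    using assms by (simp add: of_int_eta GF_mult power_mult_distrib)
qed (rule eta_range)

lemma eta_minus_one: "eta q (-1::'f) = (-1) ^ ((q - 1) div 2)"
proof (rule of_int_inj_on_signs)
  show "((-1::int) ^ ((q - 1) div 2)) \<in> {-1, 0, 1}" by (simp add: minus_one_power_iff)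
  show "(of_int (eta q (-1::'f)) :: 'f) = of_int ((-1) ^ ((q - 1) div 2))"
    using of_int_eta[OF GF_uminus[OF GF_one]] by simp
qed (rule eta_range)

lemma eta_eq_0_iff [simp]: "eta q (a::'f) = 0 \<longleftrightarrow> a = 0"
  unfolding eta_def by simp

lemma eta_square: "b \<in> GF q \<Longrightarrow> b \<noteq> 0 \<Longrightarrow> eta q ((b::'f) ^ 2) = 1"
  unfolding eta_def by (auto simp: GF_power)

lemma eta_one: "eta q (1::'f) = 1"
  using eta_square[of 1] by simp

lemma eta_minus_one_power: "eta q ((-1::'f) ^ j) = eta q (-1::'f) ^ j"
proof (induction j)
  case (Suc j)
  have "eta q ((-1::'f) * (-1) ^ j) = eta q (-1::'f) * eta q ((-1::'f) ^ j)"
    by (rule eta_mult[OF GF_uminus[OF GF_one] GF_minus_one_power])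
  then show ?case using Suc by (simp only: power_Suc)
qed (simp add: eta_one)

lemma eta_square_mult:
  "b \<in> GF q \<Longrightarrow> b \<noteq> 0 \<Longrightarrow> a \<in> GF q \<Longrightarrow> eta q ((b::'f) ^ 2 * a) = eta q a"
  using eta_mult[OF GF_power[of b q 2]] eta_square[of b] by simp

lemma sum_GF_q_reflect:
  "t \<in> GF q \<Longrightarrow> (\<Sum>u\<in>GF q. f ((t::'f) - u)) = (\<Sum>u\<in>GF q. (f u :: 'a::comm_monoid_add))"
  by (rule sum.reindex_bij_witness[of _ "\<lambda>u. t - u" "\<lambda>u. t - u"]) (auto intro: GF_diff)

lemma sum_GF_q_scale:
  "c \<in> GF q \<Longrightarrow> c \<noteq> 0 \<Longrightarrow> (\<Sum>u\<in>GF q. f ((c::'f) * u)) = (\<Sum>u\<in>GF q. (f u :: 'a::comm_monoid_add))"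
  by (rule sum.reindex_bij_witness[of _ "\<lambda>u. u / c" "\<lambda>u. c * u"]) (auto intro: GF_mult GF_divide)

lemma sum_eta: "(\<Sum>a\<in>GF q. eta q (a::'f)) = 0"
proof -
  have "nonzero_squares \<noteq> GFq_star"
    using card_nonzero_squares card_GFq_star q_ge_3 by auto
  then obtain c where c: "c \<in> GFq_star" "c \<notin> nonzero_squares"
    using nonzero_squares_subset by blast
  \<comment> \<open>multiplication by the non-square c permutes GF q and changes the sign of eta\<close>
  then have c': "c \<in> GF q" "c \<noteq> 0" and "eta q c = -1"
    using eta_def_GF_q[of c] by (auto simp: GFq_star_def)
  then have "(\<Sum>a\<in>GF q. eta q (a::'f)) = - (\<Sum>a\<in>GF q. eta q (c * a))"
    by (simp add: eta_mult sum_negf)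
  also have "\<dots> = - (\<Sum>a\<in>GF q. eta q (a::'f))"
    using sum_GF_q_scale[OF c'] by simp
  finally show ?thesis by simp
qed

lemma sum_eta_mult_left: "c \<in> GF q \<Longrightarrow> (\<Sum>u\<in>GF q. eta q ((c::'f) * u)) = 0"
  using sum_eta by (simp add: eta_mult sum_distrib_left[symmetric])

lemma sum_eta_diff: "t \<in> GF q \<Longrightarrow> (\<Sum>u\<in>GF q. eta q ((t::'f) - u)) = 0"
  using sum_GF_q_reflect[of t "eta q"] sum_eta by simp


lemma card_eta_scaled_eq:
  assumes k: "k \<in> GFq_star" and \<epsilon>: "\<epsilon> = 1 \<or> \<epsilon> = -1"
  shows "card {c\<in>GFq_star. eta q (k * c) = \<epsilon>} = (q - 1) div 2"
proof -
  have k': "k \<in> GF q" "k \<noteq> 0" using k by (auto simp: GFq_star_def)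
  have "card {c\<in>GFq_star. eta q (k * c) = \<epsilon>} = card ((\<lambda>c. k * c) ` {c\<in>GFq_star. eta q (k * c) = \<epsilon>})"
    by (rule card_image[symmetric]) (use k' in \<open>auto simp: inj_on_def\<close>)
  also have "(\<lambda>c. k * c) ` {c\<in>GFq_star. eta q (k * c) = \<epsilon>} = {z\<in>GFq_star. eta q z = \<epsilon>}"
  proof (intro equalityI subsetI)
    fix z assume z: "z \<in> {z\<in>GFq_star. eta q z = \<epsilon>}"
    then have "z / k \<in> {c\<in>GFq_star. eta q (k * c) = \<epsilon>}"
      using k' by (auto simp: GFq_star_def intro: GF_divide)
    moreover have "z = k * (z / k)" using k' by simp
    ultimately show "z \<in> (\<lambda>c. k * c) ` {c\<in>GFq_star. eta q (k * c) = \<epsilon>}" by blast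
  qed (use k GFq_star_mult in auto)
  also have "card {z\<in>GFq_star. eta q z = \<epsilon>} = (q - 1) div 2"
  proof -
    have "eta q z = (if z \<in> nonzero_squares then 1 else -1)" if "z \<in> GFq_star" for z
      using eta_def_GF_q[of z] that by (simp add: GFq_star_def)
    then have "{z\<in>GFq_star. eta q z = 1} = nonzero_squares"
      and "{z\<in>GFq_star. eta q z = -1} = GFq_star - nonzero_squares"
      using nonzero_squares_subset by (auto split: if_splits)
    moreover have "card (GFq_star - nonzero_squares) = (q - 1) div 2"
      using card_nonzero_squares card_GFq_star nonzero_squares_subset
      by (simp add: card_Diff_subset finite_subset)
    ultimately show ?thesis using \<epsilon> card_nonzero_squares by auto
  qed
  finally show ?thesis .
qed

lemma card_solutions_scaled_square:
  assumes l: "l \<in> GF q" "l \<noteq> 0" and t: "t \<in> GF q"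
  shows "int (card {z\<in>GF q. l * z ^ 2 = (t::'f)}) = 1 + eta q (l * t)"
proof (cases "t = 0")
  case True
  then have "{z\<in>GF q. l * z ^ 2 = (t::'f)} = {0}" using l by auto
  then show ?thesis using True by simp
next
  case False
  have tl: "t / l \<in> GF q" using t l by (auto intro: GF_divide)
  have "l * t = l ^ 2 * (t / l)" using l by (simp add: power2_eq_square)
  then have eta_lt: "eta q (l * t) = eta q (t / l)" using eta_square_mult[OF l tl] by simp
  have S: "{z\<in>GF q. l * z ^ 2 = t} = {z\<in>GF q. z ^ 2 = t / l}" using l by (auto simp: field_simps)
  show ?thesis
  proof (cases "\<exists>b\<in>GF q. b ^ 2 = t / l")
    case True
    then obtain b where b: "b \<in> GF q" "b ^ 2 = t / l" by auto
    have "b \<noteq> 0" using b False l by auto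
    then have "b \<noteq> -b" using two_neq_zero by (metis mult_2 add_eq_0_iff2 mult_eq_0_iff)
    moreover have "{z\<in>GF q. z ^ 2 = t / l} = {b, -b}"
    proof -
      have "z ^ 2 = b ^ 2 \<longleftrightarrow> z = b \<or> z = -b" for z :: 'f by (rule power2_eq_iff)
      then show ?thesis using b by (auto intro: GF_uminus)
    qed
    moreover have "eta q (t / l) = 1" using True False l unfolding eta_def by auto
    ultimately show ?thesis using S eta_lt by simp
  next
    case False
    then show ?thesis using S eta_lt \<open>t \<noteq> 0\<close> l unfolding eta_def by auto
  qed
qed

lemma sum_scaled_squares:
  assumes l: "(l::'f) \<in> GF q" "l \<noteq> 0"
  shows "(\<Sum>z\<in>GF q. f (l * z ^ 2)) = (\<Sum>u\<in>GF q. (1 + eta q (l * u)) * (f u :: int))"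
proof -
  have sub: "(\<lambda>z. l * z ^ 2) ` GF q \<subseteq> (GF q :: 'f set)" using l by (auto intro: GF_mult GF_power)
  have fin: "finite (GF q :: 'f set)" by simp
  have "(\<Sum>z\<in>GF q. f (l * z ^ 2)) = (\<Sum>u\<in>GF q. \<Sum>z\<in>{z\<in>GF q. l * z ^ 2 = u}. f (l * z ^ 2))"
    using sum.group[OF fin fin sub, where h = "\<lambda>z. f (l * z ^ 2)"] by simp
  also have "\<dots> = (\<Sum>u\<in>GF q. int (card {z\<in>GF q. l * z ^ 2 = u}) * f u)"
    by (intro sum.cong refl) simp
  also have "\<dots> = (\<Sum>u\<in>GF q. (1 + eta q (l * u)) * f u)"
    by (intro sum.cong refl) (simp add: card_solutions_scaled_square[OF l])
  finally show ?thesis .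
qed

text \<open>The function v(t) of Lidl and Niederreiter, Theorem 6.26.\<close>

definition nu :: "'f \<Rightarrow> int" where "nu t = (if t = 0 then int q else 0) - 1"

lemma sum_nu_diff: "t \<in> GF q \<Longrightarrow> (\<Sum>u\<in>GF q. nu ((t::'f) - u)) = 0"
  using sum_GF_q_reflect[of t nu] card_GF_q by (simp add: nu_def sum_subtractf sum.delta)

lemma sum_eta_mult_nu_diff:
  assumes l: "l \<in> GF q" and t: "t \<in> GF q"
  shows "(\<Sum>u\<in>GF q. eta q ((l::'f) * u) * nu (t - u)) = int q * eta q (l * t)"
proof -
  have "eta q (l * u) * nu (t - u) = (if u = t then int q * eta q (l * t) else 0) - eta q (l * u)"
    for u :: 'f
    by (auto simp: nu_def algebra_simps)
  then show ?thesis using t sum_eta_mult_left[OF l] by (simp add: sum_subtractf sum.delta')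
qed

text \<open>A Jacobi sum: for nonzero t, the substitution u = t/(v+1) turns it into the sum of
  eta over GF q - {-1}.\<close>

lemma sum_eta_mult_diff:
  assumes t: "t \<in> GF q"
  shows "(\<Sum>u\<in>GF q. eta q (u * ((t::'f) - u))) = eta q (-1::'f) * nu t"
proof -
  have star: "(\<Sum>u\<in>GF q. eta q (u * ((t::'f) - u))) = (\<Sum>u\<in>GFq_star. eta q (u * (t - u)))"
    unfolding GFq_star_def by (subst sum.remove[of _ 0]) auto
  show ?thesis
  proof (cases "t = 0")
    case True
    have "eta q (u * (t - u)) = eta q (-1::'f)" if "u \<in> GFq_star" for u
      using eta_square_mult[of u "-1"] that True GF_uminus[OF GF_one]
      by (simp add: GFq_star_def power2_eq_square)
    then have "(\<Sum>u\<in>GFq_star. eta q (u * (t - u))) = int (q - 1) * eta q (-1::'f)"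
      using card_GFq_star by simp
    then show ?thesis using star True q_ge_3 by (simp add: nu_def of_nat_diff)
  next
    case False
    have "(\<Sum>u\<in>GFq_star. eta q (u * (t - u))) = (\<Sum>u\<in>GFq_star. eta q (t / u - 1))"
    proof (rule sum.cong)
      fix u assume "u \<in> GFq_star"
      then have u: "u \<in> GF q" "u \<noteq> 0" by (auto simp: GFq_star_def)
      then have "u * (t - u) = u ^ 2 * (t / u - 1)" by (simp add: power2_eq_square field_simps)
      then show "eta q (u * (t - u)) = eta q (t / u - 1)"
        using eta_square_mult[OF u GF_diff[OF GF_divide[OF t u(1)] GF_one]] by simp
    qed simp
    also have "\<dots> = (\<Sum>v\<in>GF q - {-1}. eta q (v::'f))"
      by (rule sum.reindex_bij_witness[of _ "\<lambda>v. t / (v + 1)" "\<lambda>u. t / u - 1"])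
        (use False in \<open>auto simp: GFq_star_def eq_neg_iff_add_eq_0 intro!: GF_diff GF_divide GF_add t\<close>)
    also have "\<dots> = - eta q (-1::'f)"
      using sum_eta by (subst sum_diff1) (auto intro: GF_uminus)
    finally show ?thesis using star False by (simp add: nu_def)
  qed
qed

lemma sum_eta_mult_eta_diff:
  assumes l: "l \<in> GF q" and \<kappa>: "\<kappa> \<in> GF q" and t: "t \<in> GF q"
  shows "(\<Sum>u\<in>GF q. eta q ((l::'f) * u) * eta q (\<kappa> * (t - u))) = eta q (l * \<kappa>) * (eta q (-1::'f) * nu t)"
proof -
  have "eta q (l * u) * eta q (\<kappa> * (t - u)) = eta q (l * \<kappa>) * eta q (u * (t - u))"
    if u: "u \<in> GF q" for u
  proof -
    have tu: "t - u \<in> GF q" using GF_diff[OF t u] .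
    have "eta q (l * u) * eta q (\<kappa> * (t - u)) = eta q ((l * \<kappa>) * (u * (t - u)))"
      using eta_mult[OF GF_mult[OF l u] GF_mult[OF \<kappa> tu]] by (simp add: algebra_simps)
    also have "\<dots> = eta q (l * \<kappa>) * eta q (u * (t - u))"
      using eta_mult[OF GF_mult[OF l \<kappa>] GF_mult[OF u tu]] .
    finally show ?thesis .
  qed
  then show ?thesis using sum_eta_mult_diff[OF t] by (simp add: sum_distrib_left[symmetric])
qed

subsection \<open>Diagonal quadratic equations\<close>

definition diag_count :: "(nat \<Rightarrow> 'f) \<Rightarrow> nat \<Rightarrow> 'f \<Rightarrow> nat" where
  "diag_count \<mu> k t = card {v \<in> PiE {..<k} (\<lambda>_. GF q). (\<Sum>i<k. \<mu> i * v i ^ 2) = t}"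

lemma diag_count_0: "diag_count \<mu> 0 t = (if t = 0 then 1 else 0)"
  unfolding diag_count_def by simp

lemma diag_count_Suc:
  "int (diag_count \<mu> (Suc k) t) = (\<Sum>z\<in>GF q. int (diag_count \<mu> k (t - \<mu> k * z ^ 2)))"
proof -
  let ?P = "PiE {..<k} (\<lambda>_. GF q :: 'f set)"
  let ?upd = "\<lambda>(z, w). w(k := z)"
  have sum_upd: "(\<Sum>i<Suc k. \<mu> i * (w(k := z)) i ^ 2) = (\<Sum>i<k. \<mu> i * w i ^ 2) + \<mu> k * z ^ 2"
    for w and z :: 'f
  proof -
    have "(\<Sum>i<k. \<mu> i * (w(k := z)) i ^ 2) = (\<Sum>i<k. \<mu> i * w i ^ 2)"
      by (rule sum.cong) auto
    then show ?thesis by simp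
  qed
  have "PiE {..<Suc k} (\<lambda>_. GF q) = ?upd ` (GF q \<times> ?P)"
    using PiE_insert_eq[of k "{..<k}" "\<lambda>_. GF q :: 'f set"] by (simp add: lessThan_Suc)
  then have "{v \<in> PiE {..<Suc k} (\<lambda>_. GF q). (\<Sum>i<Suc k. \<mu> i * v i ^ 2) = t}
      = ?upd ` (SIGMA z:GF q. {w \<in> ?P. (\<Sum>i<k. \<mu> i * w i ^ 2) = t - \<mu> k * z ^ 2})"
    by (auto simp: sum_upd algebra_simps)
  moreover have "inj_on ?upd (SIGMA z:GF q. {w \<in> ?P. (\<Sum>i<k. \<mu> i * w i ^ 2) = t - \<mu> k * z ^ 2})"
    by (rule inj_on_subset[OF inj_combinator[of k "{..<k}" "\<lambda>_. GF q"]]) auto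
  ultimately have "diag_count \<mu> (Suc k) t
      = card (SIGMA z:GF q. {w \<in> ?P. (\<Sum>i<k. \<mu> i * w i ^ 2) = t - \<mu> k * z ^ 2})"
    unfolding diag_count_def by (simp add: card_image)
  also have "\<dots> = (\<Sum>z\<in>GF q. diag_count \<mu> k (t - \<mu> k * z ^ 2))"
    unfolding diag_count_def
    by (rule card_SigmaI) (auto intro: finite_subset[OF _ finite_PiE[of "{..<k}"]])
  finally show ?thesis by simp
qed

lemma diag_count_Suc_zero: "\<mu> k = 0 \<Longrightarrow> diag_count \<mu> (Suc k) t = q * diag_count \<mu> k t"
proof -
  assume "\<mu> k = 0"
  then have "int (diag_count \<mu> (Suc k) t) = int (q * diag_count \<mu> k t)"
    using diag_count_Suc[of \<mu> k t] card_GF_q by simp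
  then show ?thesis by (simp only: of_nat_eq_iff)
qed

lemma diag_count_extend_zero:
  "(\<And>i. i \<ge> k \<Longrightarrow> \<mu> i = 0) \<Longrightarrow> diag_count \<mu> (k + j) t = q ^ j * diag_count \<mu> k t"
  by (induction j) (auto simp: diag_count_Suc_zero)

lemma diag_count_Suc_eta:
  assumes "\<mu> k \<in> GF q" and "\<mu> k \<noteq> 0"
  shows "int (diag_count \<mu> (Suc k) t) = (\<Sum>u\<in>GF q. (1 + eta q (\<mu> k * u)) * int (diag_count \<mu> k (t - u)))"
  using diag_count_Suc[of \<mu> k t] sum_scaled_squares[OF assms, where f = "\<lambda>u. int (diag_count \<mu> k (t - u))"]
  by simp


lemma diag_count_even_step:
  assumes "even k" and l: "\<mu> k \<in> GF q" "\<mu> k \<noteq> 0" and \<Delta>: "(\<Prod>i<k. \<mu> i) \<in> GF q"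
    and t: "t \<in> GF q"
    and IH: "\<And>u. u \<in> GF q \<Longrightarrow> int q * int (diag_count \<mu> k u)
               = int q ^ k + nu u * int q ^ (k div 2) * eta q ((-1) ^ (k div 2) * (\<Prod>i<k. \<mu> i))"
  shows "int (diag_count \<mu> (Suc k) t)
           = int q ^ k + int q ^ (k div 2) * eta q ((-1) ^ (k div 2) * (\<Prod>i<Suc k. \<mu> i) * t)"
proof -
  define \<kappa> where "\<kappa> = (-1) ^ (k div 2) * (\<Prod>i<k. \<mu> i)"
  define C where "C = int q ^ (k div 2) * eta q \<kappa>"
  have \<kappa>: "\<kappa> \<in> GF q" unfolding \<kappa>_def by (intro GF_mult GF_minus_one_power \<Delta>)
  have "int q * int (diag_count \<mu> (Suc k) t)
      = (\<Sum>u\<in>GF q. (1 + eta q (\<mu> k * u)) * (int q * int (diag_count \<mu> k (t - u))))"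
    by (simp add: diag_count_Suc_eta[of \<mu> k, OF l] sum_distrib_left algebra_simps)
  also have "\<dots> = (\<Sum>u\<in>GF q. (1 + eta q (\<mu> k * u)) * (int q ^ k + nu (t - u) * C))"
    using IH[OF GF_diff[OF t]] by (simp add: C_def \<kappa>_def mult.assoc)
  also have "\<dots> = (\<Sum>u\<in>(GF q :: 'f set). int q ^ k) + int q ^ k * (\<Sum>u\<in>GF q. eta q (\<mu> k * u))
      + C * (\<Sum>u\<in>GF q. nu (t - u)) + C * (\<Sum>u\<in>GF q. eta q (\<mu> k * u) * nu (t - u))"
    by (simp add: sum.distrib sum_distrib_left algebra_simps)
  also have "\<dots> = int q * (int q ^ k + C * eta q (\<mu> k * t))"
    using card_GF_q sum_eta_mult_left[OF l(1)] sum_nu_diff[OF t] sum_eta_mult_nu_diff[OF l(1) t]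
    by (simp add: algebra_simps)
  finally have "int (diag_count \<mu> (Suc k) t) = int q ^ k + C * eta q (\<mu> k * t)"
    using p_ge_2 by simp
  moreover have "eta q \<kappa> * eta q (\<mu> k * t) = eta q ((-1) ^ (k div 2) * (\<Prod>i<Suc k. \<mu> i) * t)"
    using eta_mult[OF \<kappa> GF_mult[OF l(1) t]] by (simp add: \<kappa>_def algebra_simps)
  ultimately show ?thesis by (simp add: C_def mult.assoc)
qed

lemma diag_count_odd_step:
  assumes "odd k" and l: "\<mu> k \<in> GF q" "\<mu> k \<noteq> 0" and \<Delta>: "(\<Prod>i<k. \<mu> i) \<in> GF q"
    and t: "t \<in> GF q"
    and IH: "\<And>u. u \<in> GF q \<Longrightarrow> int (diag_count \<mu> k u)
               = int q ^ (k - 1) + int q ^ (k div 2) * eta q ((-1) ^ (k div 2) * (\<Prod>i<k. \<mu> i) * u)"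
  shows "int q * int (diag_count \<mu> (Suc k) t)
           = int q ^ Suc k + nu t * int q ^ (Suc k div 2) * eta q ((-1) ^ (Suc k div 2) * (\<Prod>i<Suc k. \<mu> i))"
proof -
  define \<kappa> where "\<kappa> = (-1) ^ (k div 2) * (\<Prod>i<k. \<mu> i)"
  define d where "d = int q ^ (k div 2)"
  have \<kappa>: "\<kappa> \<in> GF q" unfolding \<kappa>_def by (intro GF_mult GF_minus_one_power \<Delta>)
  have tu: "t - u \<in> GF q" if "u \<in> GF q" for u using GF_diff[OF t that] .
  have sum_shift: "(\<Sum>u\<in>GF q. eta q (\<kappa> * (t - u))) = 0"
    using sum_eta_diff[OF t] by (simp add: eta_mult[OF \<kappa> tu] sum_distrib_left[symmetric])
  have jacobi: "(\<Sum>u\<in>GF q. eta q (\<mu> k * u) * eta q (\<kappa> * (t - u)))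
      = eta q (\<mu> k * \<kappa>) * (eta q (-1::'f) * nu t)"
    by (rule sum_eta_mult_eta_diff[OF l(1) \<kappa> t])
  have "int (diag_count \<mu> (Suc k) t)
      = (\<Sum>u\<in>GF q. (1 + eta q (\<mu> k * u)) * (int q ^ (k - 1) + d * eta q (\<kappa> * (t - u))))"
    using IH[OF tu] by (simp add: diag_count_Suc_eta[of \<mu> k, OF l] d_def \<kappa>_def mult.assoc)
  also have "\<dots> = (\<Sum>u\<in>(GF q :: 'f set). int q ^ (k - 1)) + int q ^ (k - 1) * (\<Sum>u\<in>GF q. eta q (\<mu> k * u))
      + d * (\<Sum>u\<in>GF q. eta q (\<kappa> * (t - u))) + d * (\<Sum>u\<in>GF q. eta q (\<mu> k * u) * eta q (\<kappa> * (t - u)))"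
    by (simp add: sum.distrib sum_distrib_left algebra_simps)
  also have "\<dots> = int q * int q ^ (k - 1) + d * (eta q (\<mu> k * \<kappa>) * (eta q (-1::'f) * nu t))"
    using card_GF_q sum_eta_mult_left[OF l(1)] sum_shift jacobi by simp
  finally have count: "int (diag_count \<mu> (Suc k) t)
      = int q ^ k + d * (eta q (\<mu> k * \<kappa>) * (eta q (-1::'f) * nu t))"
    using \<open>odd k\<close> by (cases k) auto
  have half: "Suc k div 2 = Suc (k div 2)" using \<open>odd k\<close> by presburger
  have "(-1::'f) ^ (Suc k div 2) * (\<Prod>i<Suc k. \<mu> i) = (\<mu> k * \<kappa>) * (-1)"
    unfolding half \<kappa>_def by (simp add: algebra_simps)
  then have "eta q ((-1) ^ (Suc k div 2) * (\<Prod>i<Suc k. \<mu> i)) = eta q (\<mu> k * \<kappa>) * eta q (-1::'f)"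
    using eta_mult[OF GF_mult[OF l(1) \<kappa>] GF_uminus[OF GF_one]] by simp
  then show ?thesis using count half by (simp add: d_def algebra_simps)
qed

lemma diag_count_formula:
  assumes "\<And>i. i < k \<Longrightarrow> \<mu> i \<in> GF q \<and> \<mu> i \<noteq> 0" and "t \<in> GF q"
  shows "(even k \<longrightarrow> int q * int (diag_count \<mu> k t)
           = int q ^ k + nu t * int q ^ (k div 2) * eta q ((-1) ^ (k div 2) * (\<Prod>i<k. \<mu> i))) \<and>
         (odd k \<longrightarrow> int (diag_count \<mu> k t)
           = int q ^ (k - 1) + int q ^ (k div 2) * eta q ((-1) ^ (k div 2) * (\<Prod>i<k. \<mu> i) * t))"
  using assms
proof (induction k arbitrary: t)
  case 0
  then show ?case by (simp add: diag_count_0 nu_def eta_one)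
next
  case (Suc k)
  have \<mu>: "\<mu> k \<in> GF q" "\<mu> k \<noteq> 0" "(\<Prod>i<k. \<mu> i) \<in> GF q"
    using Suc.prems(1) by (auto intro: GF_prod)
  show ?case
  proof (cases "even k")
    case True
    then show ?thesis
      using diag_count_even_step[OF True \<mu> Suc.prems(2)] Suc.IH Suc.prems(1) by simp
  next
    case False
    then show ?thesis
      using diag_count_odd_step[OF False \<mu> Suc.prems(2)] Suc.IH Suc.prems(1) by simp
  qed
qed

end

section \<open>Descent from GF q to GF p\<close>

locale descent = subfield_q p L TY m for p L :: nat and TY :: "'f::{field,finite} itself" and m :: nat +
  fixes N :: nat and \<theta> :: 'f
  assumes N_pos: "N > 0" and N_dvd: "N dvd p - 1"
    and N_coprime: "coprime N ((p ^ m - 1) div (p - 1))"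
    and theta_in: "\<theta> \<in> GF (p ^ m)"
    and theta_root: "\<theta> ^ ((p ^ m - 1) div N) = 1"
    and theta_prim: "\<forall>k. 0 < k \<and> k < (p ^ m - 1) div N \<longrightarrow> \<theta> ^ k \<noteq> 1"
begin

abbreviation "K \<equiv> (q - 1) div N"

definition GFp_star :: "'f set" where "GFp_star = GF p - {0}"

lemma p_minus_1_dvd: "p - 1 dvd q - 1"
proof -
  have "int p ^ m - 1 = (int p - 1) * (\<Sum>i<m. int p ^ i)" by (rule power_diff_1_eq)
  then have "int (p - 1) dvd int (q - 1)" using p_ge_2 q_ge_3 by (simp add: of_nat_diff)
  then show ?thesis by (simp only: int_dvd_int_iff)
qed

lemma N_dvd_q_minus_1: "N dvd q - 1"
  using N_dvd p_minus_1_dvd dvd_trans by blast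

lemma K_mult_N: "K * N = q - 1"
  using N_dvd_q_minus_1 by simp

lemma K_pos: "K \<ge> 1"
  using K_mult_N q_ge_3 by (cases K) auto

lemma theta_nonzero: "\<theta> \<noteq> 0"
  using theta_root K_pos by (cases K) auto

lemma theta_power_inj:
  assumes "i < K" and "j < K" and "\<theta> ^ i = \<theta> ^ j"
  shows "i = j"
proof (rule ccontr)
  assume "i \<noteq> j"
  then obtain a b where ab: "{a, b} = {i, j}" "a < b" by (metis insert_commute linorder_neqE)
  have "\<theta> ^ a * \<theta> ^ (b - a) = \<theta> ^ a * 1"
    using ab assms(3) by (auto simp: power_add[symmetric] doubleton_eq_iff)
  then have "\<theta> ^ (b - a) = 1" using theta_nonzero by simp
  moreover have "0 < b - a" "b - a < K" using ab assms(1,2) by (auto simp: doubleton_eq_iff)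
  ultimately show False using theta_prim by blast
qed

lemma roots_of_unity_theta_powers: "{x::'f. x ^ K = 1} = (\<lambda>i. \<theta> ^ i) ` {..<K}"
proof -
  have sub: "(\<lambda>i. \<theta> ^ i) ` {..<K} \<subseteq> {x::'f. x ^ K = 1}"
  proof
    fix x assume "x \<in> (\<lambda>i. \<theta> ^ i) ` {..<K}"
    then obtain i where "x = \<theta> ^ i" by auto
    then have "x ^ K = (\<theta> ^ K) ^ i" by (simp add: power_mult[symmetric] mult.commute)
    then show "x \<in> {x. x ^ K = 1}" using theta_root by simp
  qed
  have "card ((\<lambda>i. \<theta> ^ i) ` {..<K}) = K"
    by (subst card_image) (auto simp: inj_on_def intro: theta_power_inj)
  moreover have "card {x::'f. x ^ K = 1} \<le> K" by (rule card_roots_of_unity_le[OF K_pos])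
  moreover have "card ((\<lambda>i. \<theta> ^ i) ` {..<K}) \<le> card {x::'f. x ^ K = 1}"
    using sub by (intro card_mono) auto
  ultimately show ?thesis using sub by (intro card_subset_eq[symmetric]) auto
qed

lemma GF_p_subset: "GF p \<subseteq> (GF q :: 'f set)"
  using GF_subset_GF_power[of p m] by simp

lemma card_GFp_star: "card GFp_star = p - 1"
  unfolding GFp_star_def using card_GF[of 1] GF_zero[of 1] by (simp add: card_Diff_singleton)

lemma GFp_star_subset: "GFp_star \<subseteq> GFq_star"
  unfolding GFp_star_def GFq_star_def using GF_p_subset by auto

lemma GFp_star_power_p_minus_1: "a \<in> GFp_star \<Longrightarrow> a ^ (p - 1) = 1"
proof -
  assume a: "a \<in> GFp_star"
  then have "a ^ p = a" "a \<noteq> 0" unfolding GFp_star_def GF_def by auto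
  moreover have "p = Suc (p - 1)" using p_ge_2 by simp
  ultimately have "a * a ^ (p - 1) = a * 1" by (metis power_Suc mult_1_right)
  then show ?thesis using \<open>a \<noteq> 0\<close> by simp
qed

text \<open>This is where the coprimality hypothesis on N is used.\<close>

lemma gcd_K_p_minus_1: "gcd K (p - 1) = (p - 1) div N"
proof -
  define S where "S = (q - 1) div (p - 1)"
  define g where "g = (p - 1) div N"
  have "q - 1 = (p - 1) * S" unfolding S_def using p_minus_1_dvd by simp
  moreover have pg: "p - 1 = g * N" unfolding g_def using N_dvd by simp
  ultimately have "K = g * S" using N_pos by simp
  then have "gcd K (p - 1) = g * gcd S N" using pg gcd_mult_distrib_nat by simp
  moreover have "coprime N S" using N_coprime S_def by simp
  ultimately show ?thesis unfolding g_def by (simp add: coprime_iff_gcd_eq_1 gcd.commute)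
qed

lemma card_GFp_star_power_K_eq:
  assumes z: "z \<in> GFq_star"
  shows "card {a\<in>GFp_star. a ^ K = z ^ K} = (p - 1) div N"
proof -
  let ?T = "\<lambda>a::'f. a ^ K"
  let ?S = "{x::'f. x ^ N = 1}"
  have P0: "0 \<notin> GFp_star" unfolding GFp_star_def by simp
  have Pm: "x * y \<in> GFp_star" if "x \<in> GFp_star" "y \<in> GFp_star" for x y
    using that unfolding GFp_star_def by (auto intro: GF_mult)
  have Pi: "inverse x \<in> GFp_star" if "x \<in> GFp_star" for x
    using that unfolding GFp_star_def by (auto intro: GF_inverse)
  have fibre: "card {x\<in>GFp_star. ?T x = y} = card {x\<in>GFp_star. ?T x = 1}" if "y \<in> ?T ` GFp_star" for y
    by (rule card_fibre_mult_hom[OF P0 Pm Pi _ _ that]) (use P0 in \<open>auto simp: power_mult_distrib\<close>)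
  have in_S: "x ^ K \<in> ?S" if "x \<in> GFq_star" for x
  proof -
    have "(x ^ K) ^ N = x ^ (K * N)" by (simp add: power_mult)
    also have "\<dots> = 1" using K_mult_N GFq_star_power_q_minus_1[OF that] by simp
    finally show ?thesis by simp
  qed
  have sub: "?T ` GFp_star \<subseteq> ?S" using in_S GFp_star_subset by auto
  have "{x\<in>GFp_star. ?T x = 1} \<subseteq> {x. x ^ gcd K (p - 1) = 1}"
    using power_gcd_eq_1[of _ K "p - 1"] GFp_star_power_p_minus_1 K_pos by auto
  moreover have "card {x::'f. x ^ gcd K (p - 1) = 1} \<le> gcd K (p - 1)"
    by (rule card_roots_of_unity_le) (use K_pos in \<open>simp add: Suc_le_eq\<close>)
  ultimately have bound: "card {x\<in>GFp_star. ?T x = 1} \<le> (p - 1) div N"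
    using gcd_K_p_minus_1 by (metis (no_types, lifting) card_mono finite order_trans)
  have "card GFp_star = card ?S * ((p - 1) div N)"
    using card_GFp_star card_roots_of_unity[OF N_dvd_q_minus_1] N_pos N_dvd
    by (simp add: Suc_le_eq)
  moreover have "1 \<in> GFp_star" unfolding GFp_star_def by simp
  ultimately have res: "card {x\<in>GFp_star. ?T x = 1} = (p - 1) div N \<and> ?T ` GFp_star = ?S"
    by (intro uniform_fibres_bound_imp_surj[OF _ _ sub fibre _ bound]) auto
  then have "z ^ K \<in> ?T ` GFp_star" using in_S[OF z] by simp
  then show ?thesis using fibre res by simp
qed


lemma card_GFp_star_times_theta_powers:
  assumes z: "z \<in> GFq_star"
  shows "card {(a, i). a \<in> GFp_star \<and> i < K \<and> a * \<theta> ^ i = z} = (p - 1) div N"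
proof -
  let ?A = "{(a, i). a \<in> GFp_star \<and> i < K \<and> a * \<theta> ^ i = z}"
  have "inj_on fst ?A"
  proof (rule inj_onI)
    fix x y assume "x \<in> ?A" "y \<in> ?A" "fst x = fst y"
    then obtain a i j where xy: "x = (a, i)" "y = (a, j)" "a \<in> GFp_star" "i < K" "j < K"
      "a * \<theta> ^ i = a * \<theta> ^ j" by auto
    then have "\<theta> ^ i = \<theta> ^ j" by (simp add: GFp_star_def)
    then show "x = y" using theta_power_inj xy by blast
  qed
  moreover have "fst ` ?A = {a\<in>GFp_star. a ^ K = z ^ K}"
  proof (intro equalityI subsetI)
    fix a assume "a \<in> fst ` ?A"
    then obtain i where "a \<in> GFp_star" "z = a * \<theta> ^ i" by force
    then show "a \<in> {a\<in>GFp_star. a ^ K = z ^ K}"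
      using theta_root by (simp add: power_mult_distrib power_mult[symmetric] mult.commute[of i]
          power_mult)
  next
    fix a assume a: "a \<in> {a\<in>GFp_star. a ^ K = z ^ K}"
    then have "a \<noteq> 0" "z \<noteq> 0" using z by (auto simp: GFp_star_def GFq_star_def)
    then have "(z / a) ^ K = 1" using a by (simp add: power_divide)
    then obtain i where "i < K" "z / a = \<theta> ^ i" using roots_of_unity_theta_powers by blast
    then have "(a, i) \<in> ?A" using a \<open>a \<noteq> 0\<close> by (auto simp: field_simps)
    then show "a \<in> fst ` ?A" by force
  qed
  ultimately show ?thesis using card_image[of fst ?A] card_GFp_star_power_K_eq[OF z] by simp
qed

lemma card_tr_kernel_scaled:
  assumes g: "g \<in> GFq_star"
  shows "card {z\<in>GF q. tr p m (g * z) = 0} = p ^ (m - 1)"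
proof -
  have g': "g \<in> GF q" "g \<noteq> 0" using g by (auto simp: GFq_star_def)
  have "card {z\<in>GF q. tr p m (g * z) = 0} = card ((\<lambda>z. g * z) ` {z\<in>GF q. tr p m (g * z) = 0})"
    by (rule card_image[symmetric]) (use g' in \<open>auto simp: inj_on_def\<close>)
  also have "(\<lambda>z. g * z) ` {z\<in>GF q. tr p m (g * z) = 0} = {x\<in>GF q. tr p m x = 0}"
  proof (intro equalityI subsetI)
    fix x :: 'f assume "x \<in> {x\<in>GF q. tr p m x = 0}"
    then have "x / g \<in> {z\<in>GF q. tr p m (g * z) = 0}" "x = g * (x / g)"
      using g' by (auto intro: GF_divide)
    then show "x \<in> (\<lambda>z. g * z) ` {z\<in>GF q. tr p m (g * z) = 0}" by blast
  qed (use g' in \<open>auto intro: GF_mult\<close>)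
  also have "card \<dots> = p ^ (m - 1)"
    using card_tr_fibre[of 1 m 0] m_pos m_dvd GF_zero[of 1] by simp
  finally show ?thesis .
qed

definition psi_weight :: "'f \<Rightarrow> nat" where
  "psi_weight g = card {i\<in>{..<K}. tr p m (g * \<theta> ^ i) \<noteq> 0}"

lemma psi_weight_zero: "psi_weight 0 = 0"
  unfolding psi_weight_def using p_ge_2 by simp

lemma psi_weight_smult: "a \<in> GFp_star \<Longrightarrow> psi_weight (a * g) = psi_weight g"
  unfolding psi_weight_def GFp_star_def
  using tr_smult[of a p m] by (simp add: mult.assoc)

text \<open>Counting the pairs (a, i) with a nonzero in GF p, i < K and tr (g * (a * theta ^ i)) nonzero
  once for each scalar a and once for each product z = a * theta ^ i determines psi_weight g.\<close>

lemma card_trace_pairs_by_scalar: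
  "card {(a, i). a \<in> GFp_star \<and> i < K \<and> tr p m (g * (a * \<theta> ^ i)) \<noteq> 0} = (p - 1) * psi_weight g"
proof -
  have "(p - 1) * psi_weight g = (\<Sum>a\<in>GFp_star. psi_weight (a * g))"
    using psi_weight_smult card_GFp_star by simp
  also have "\<dots> = (\<Sum>a\<in>GFp_star. card {i\<in>{..<K}. tr p m (g * (a * \<theta> ^ i)) \<noteq> 0})"
    unfolding psi_weight_def by (simp add: algebra_simps)
  also have "\<dots> = card (SIGMA a:GFp_star. {i\<in>{..<K}. tr p m (g * (a * \<theta> ^ i)) \<noteq> 0})"
    by (subst card_SigmaI) auto
  also have "(SIGMA a:GFp_star. {i\<in>{..<K}. tr p m (g * (a * \<theta> ^ i)) \<noteq> 0})
      = {(a, i). a \<in> GFp_star \<and> i < K \<and> tr p m (g * (a * \<theta> ^ i)) \<noteq> 0}" by auto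
  finally show ?thesis by simp
qed

lemma card_trace_pairs_by_product:
  "card {(a, i). a \<in> GFp_star \<and> i < K \<and> tr p m (g * (a * \<theta> ^ i)) \<noteq> 0}
     = (p - 1) div N * card {z\<in>GFq_star. tr p m (g * z) \<noteq> 0}"
proof -
  let ?A = "{(a, i). a \<in> GFp_star \<and> i < K \<and> tr p m (g * (a * \<theta> ^ i)) \<noteq> 0}"
  let ?prod = "\<lambda>(a, i). a * \<theta> ^ i"
  let ?c = "(p - 1) div N"
  have "?prod ` ?A \<subseteq> GFq_star"
    using GFp_star_subset theta_nonzero theta_in by (auto simp: GFq_star_def intro: GF_mult GF_power)
  moreover have "finite ?A" by (rule finite_subset[of _ "GFp_star \<times> {..<K}"]) auto
  ultimately have "card ?A = (\<Sum>z\<in>GFq_star. card {x\<in>?A. ?prod x = z})"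
    using sum.group[of ?A GFq_star ?prod "\<lambda>_. 1::nat"] by (simp add: GFq_star_def)
  also have "\<dots> = (\<Sum>z\<in>GFq_star. if tr p m (g * z) \<noteq> 0 then ?c else 0)"
  proof (intro sum.cong refl)
    fix z assume z: "z \<in> GFq_star"
    show "card {x\<in>?A. ?prod x = z} = (if tr p m (g * z) \<noteq> 0 then ?c else 0)"
    proof (cases "tr p m (g * z) = 0")
      case False
      then have "{x\<in>?A. ?prod x = z} = {(a, i). a \<in> GFp_star \<and> i < K \<and> a * \<theta> ^ i = z}" by auto
      then show ?thesis using card_GFp_star_times_theta_powers[OF z] False by simp
    next
      case True
      then have empty: "{x\<in>?A. ?prod x = z} = {}" by auto
      show ?thesis unfolding empty using True by simp
    qed
  qed
  also have "\<dots> = (\<Sum>z\<in>{z\<in>GFq_star. tr p m (g * z) \<noteq> 0}. ?c)"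
    by (rule sum.inter_filter[symmetric]) (simp add: GFq_star_def)
  finally show ?thesis by simp
qed

lemma psi_weight_eq:
  assumes g: "g \<in> GFq_star"
  shows "N * psi_weight g = (p - 1) * p ^ (m - 1)"
proof -
  have "{z\<in>GFq_star. tr p m (g * z) \<noteq> 0} = GF q - {z\<in>GF q. tr p m (g * z) = 0}"
    using p_ge_2 by (auto simp: GFq_star_def)
  then have "card {z\<in>GFq_star. tr p m (g * z) \<noteq> 0} = q - p ^ (m - 1)"
    using card_tr_kernel_scaled[OF g] card_GF_q by (simp add: card_Diff_subset)
  also have "q - p ^ (m - 1) = (p - 1) * p ^ (m - 1)"
    using m_pos by (cases m) (auto simp: algebra_simps)
  finally have "(p - 1) * psi_weight g = (p - 1) div N * ((p - 1) * p ^ (m - 1))"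
    using card_trace_pairs_by_scalar[of g] card_trace_pairs_by_product[of g] by simp
  then have "(p - 1) * (N * psi_weight g) = ((p - 1) div N * N) * ((p - 1) * p ^ (m - 1))"
    by (simp add: algebra_simps)
  also have "(p - 1) div N * N = p - 1" using N_dvd by simp
  finally show ?thesis using p_ge_2 by simp
qed

definition descent_weight :: nat where "descent_weight = (p - 1) * p ^ (m - 1) div N"

lemma N_mult_descent_weight: "N * descent_weight = (p - 1) * p ^ (m - 1)"
  unfolding descent_weight_def using N_dvd by (simp add: dvd_mult2)

lemma descent_weight_pos: "descent_weight > 0"
proof -
  have "(p - 1) * p ^ (m - 1) > 0" using p_ge_2 by simp
  then show ?thesis using N_mult_descent_weight by (metis mult_0_right neq0_conv)
qed

lemma psi_weight_nonzero: "g \<in> GFq_star \<Longrightarrow> psi_weight g = descent_weight"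
proof -
  assume "g \<in> GFq_star"
  then have "N * psi_weight g = N * descent_weight"
    using psi_weight_eq N_mult_descent_weight by simp
  then show ?thesis using N_pos by simp
qed

lemma real_descent_weight: "real descent_weight = real (p - 1) * real q / (real p * real N)"
proof -
  have "real N * real descent_weight = real (p - 1) * real p ^ (m - 1)"
    using arg_cong[OF N_mult_descent_weight, of real] by (simp only: of_nat_mult of_nat_power)
  moreover have "real q = real p * real p ^ (m - 1)"
    using m_pos by (cases m) auto
  ultimately have "real descent_weight = real (p - 1) * real p ^ (m - 1) / real N"
    and "real q = real p * real p ^ (m - 1)" using N_pos by (simp_all add: field_simps)
  then show ?thesis using N_pos p_ge_2 by (simp add: field_simps del: of_nat_diff)
qed

lemma psi_add: "psi p m q N \<theta> (g + g') i = psi p m q N \<theta> g i + psi p m q N \<theta> g' i"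
  unfolding psi_def using tr_add[of 1 m] by (simp add: distrib_right)

lemma psi_smult: "s \<in> GF p \<Longrightarrow> psi p m q N \<theta> (s * g) i = s * psi p m q N \<theta> g i"
  unfolding psi_def using tr_smult[of s p m] by (simp add: mult.assoc)

lemma psi_zero: "psi p m q N \<theta> 0 i = 0"
  unfolding psi_def using p_ge_2 by simp

lemma psi_in_GF_p: "g \<in> GF q \<Longrightarrow> psi p m q N \<theta> g i \<in> GF p"
  unfolding psi_def using tr_in_GF[of "g * \<theta> ^ i" 1 m] theta_in GF_zero[of 1]
  by (simp add: GF_mult GF_power)

definition descend :: "'e set \<Rightarrow> ('e \<Rightarrow> 'f) \<Rightarrow> 'e \<times> nat \<Rightarrow> 'f" where
  "descend E c = (\<lambda>(x, i). if (x, i) \<in> E \<times> {..<K} then psi p m q N \<theta> (c x) i else 0)"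

lemma descend_add: "descend E c j + descend E d j = descend E (\<lambda>x. c x + d x) j"
  unfolding descend_def by (auto simp: psi_add split: prod.splits)

lemma descend_smult: "s \<in> GF p \<Longrightarrow> s * descend E c j = descend E (\<lambda>x. s * c x) j"
  unfolding descend_def by (auto simp: psi_smult split: prod.splits)

lemma descend_zero: "descend E (\<lambda>_. 0) = (\<lambda>_. 0)"
  unfolding descend_def by (auto simp: psi_zero)

lemma hweight_descend:
  assumes "finite E" and "\<And>x. x \<in> E \<Longrightarrow> c x \<in> GF q"
  shows "hweight (E \<times> {..<K}) (descend E c) = descent_weight * card {x\<in>E. c x \<noteq> 0}"
proof -
  have "{j \<in> E \<times> {..<K}. descend E c j \<noteq> 0}
      = (SIGMA x:E. {i\<in>{..<K}. tr p m (c x * \<theta> ^ i) \<noteq> 0})"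
    by (auto simp: descend_def psi_def)
  then have "hweight (E \<times> {..<K}) (descend E c) = (\<Sum>x\<in>E. psi_weight (c x))"
    using assms(1) by (simp add: hweight_def card_SigmaI psi_weight_def)
  also have "\<dots> = (\<Sum>x\<in>E. if c x \<noteq> 0 then descent_weight else 0)"
    using assms(2) by (intro sum.cong refl) (auto simp: psi_weight_zero psi_weight_nonzero GFq_star_def)
  also have "\<dots> = descent_weight * card {x\<in>E. c x \<noteq> 0}"
    using assms(1) by (simp add: sum.If_cases Int_def)
  finally show ?thesis .
qed

lemma descend_eq_imp_eq_on:
  assumes "\<And>x. x \<in> E \<Longrightarrow> c x \<in> GF q" and "\<And>x. x \<in> E \<Longrightarrow> d x \<in> GF q"
    and "descend E c = descend E d" and x: "x \<in> E"
  shows "c x = d x"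
proof (rule ccontr)
  assume "c x \<noteq> d x"
  then have "c x - d x \<in> GFq_star" using assms(1,2)[OF x] by (simp add: GFq_star_def GF_diff)
  then have "psi_weight (c x - d x) \<noteq> 0" using psi_weight_nonzero descent_weight_pos by simp
  then have "{i\<in>{..<K}. tr p m ((c x - d x) * \<theta> ^ i) \<noteq> 0} \<noteq> {}"
    unfolding psi_weight_def by (rule contrapos_nn) simp
  then obtain i where i: "i < K" "tr p m ((c x - d x) * \<theta> ^ i) \<noteq> 0" by blast
  have "psi p m q N \<theta> (c x) i = psi p m q N \<theta> (d x) i"
    using fun_cong[OF assms(3), of "(x, i)"] x i(1) by (simp add: descend_def)
  then have "tr p m (c x * \<theta> ^ i) = tr p m (d x * \<theta> ^ i)" using i(1) by (simp add: psi_def)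
  moreover have "tr p m ((c x - d x) * \<theta> ^ i) + tr p m (d x * \<theta> ^ i) = tr p m (c x * \<theta> ^ i)"
    using tr_add[of 1 m "(c x - d x) * \<theta> ^ i" "d x * \<theta> ^ i"] by (simp add: algebra_simps)
  ultimately show False using i(2) by simp
qed

lemma inj_on_descend:
  assumes "\<And>c x. c \<in> D \<Longrightarrow> x \<in> E \<Longrightarrow> c x \<in> GF q"
    and "\<And>c d. c \<in> D \<Longrightarrow> d \<in> D \<Longrightarrow> (\<And>x. x \<in> E \<Longrightarrow> c x = d x) \<Longrightarrow> c = d"
  shows "inj_on (descend E) D"
  by (intro inj_onI assms(2) descend_eq_imp_eq_on) (auto simp: assms(1))

lemma weight_distr_descend:
  assumes "finite E" and "finite D" and "\<And>c x. c \<in> D \<Longrightarrow> x \<in> E \<Longrightarrow> c x \<in> GF q"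
    and "inj_on (descend E) D"
  shows "weight_distr (E \<times> {..<K}) (descend E ` D)
           = image_mset (\<lambda>c. real (descent_weight * card {x\<in>E. c x \<noteq> 0})) (mset_set D)"
proof -
  have "weight_distr (E \<times> {..<K}) (descend E ` D)
      = image_mset (\<lambda>c. real (hweight (E \<times> {..<K}) (descend E c))) (mset_set D)"
    unfolding weight_distr_def using assms(4)
    by (simp add: image_mset_mset_set[symmetric] multiset.map_comp o_def)
  also have "\<dots> = image_mset (\<lambda>c. real (descent_weight * card {x\<in>E. c x \<noteq> 0})) (mset_set D)"
  proof (rule image_mset_cong)
    fix c assume "c \<in># mset_set D"
    then have "c \<in> D" using assms(2) by simp
    then show "real (hweight (E \<times> {..<K}) (descend E c)) = real (descent_weight * card {x\<in>E. c x \<noteq> 0})"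
      using hweight_descend[OF assms(1), of c] assms(3) by simp
  qed
  finally show ?thesis .
qed

lemma linear_code_descend:
  assumes "finite E" and D_GF_q: "\<And>c x. c \<in> D \<Longrightarrow> x \<in> E \<Longrightarrow> c x \<in> GF q"
    and "(\<lambda>_. 0) \<in> D"
    and D_add: "\<And>c d. c \<in> D \<Longrightarrow> d \<in> D \<Longrightarrow> (\<lambda>x. c x + d x) \<in> D"
    and D_smult: "\<And>s c. s \<in> GF p \<Longrightarrow> c \<in> D \<Longrightarrow> (\<lambda>x. s * c x) \<in> D"
    and D_faithful: "\<And>c d. c \<in> D \<Longrightarrow> d \<in> D \<Longrightarrow> (\<And>x. x \<in> E \<Longrightarrow> c x = d x) \<Longrightarrow> c = d"
    and "card D = p ^ k"
  shows "linear_code p (E \<times> {..<K}) (card E * K) k (descend E ` D)"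
  unfolding linear_code_def
proof (intro conjI)
  show "finite (E \<times> {..<K})" and "card (E \<times> {..<K}) = card E * K"
    using assms(1) by (simp_all add: card_cartesian_product)
  show "descend E ` D \<subseteq> {c. (\<forall>j\<in>E \<times> {..<K}. c j \<in> GF p) \<and> (\<forall>j. j \<notin> E \<times> {..<K} \<longrightarrow> c j = 0)}"
    using D_GF_q by (auto simp: descend_def psi_in_GF_p)
  show "(\<lambda>_. 0) \<in> descend E ` D"
    using imageI[OF assms(3), of "descend E"] by (simp only: descend_zero)
  show "\<forall>c\<in>descend E ` D. \<forall>d\<in>descend E ` D. (\<lambda>j. c j + d j) \<in> descend E ` D"
  proof (intro ballI)
    fix c' d' assume "c' \<in> descend E ` D" "d' \<in> descend E ` D"
    then obtain c d where "c \<in> D" "d \<in> D" "c' = descend E c" "d' = descend E d" by blast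
    then show "(\<lambda>j. c' j + d' j) \<in> descend E ` D"
      using imageI[OF D_add, of c d "descend E"] by (simp add: descend_add)
  qed
  show "\<forall>s\<in>GF p. \<forall>c\<in>descend E ` D. (\<lambda>j. s * c j) \<in> descend E ` D"
  proof (intro ballI)
    fix s :: 'f and c' assume "s \<in> GF p" "c' \<in> descend E ` D"
    then obtain c where "c \<in> D" "c' = descend E c" by blast
    then show "(\<lambda>j. s * c' j) \<in> descend E ` D"
      using imageI[OF D_smult, of s c "descend E"] \<open>s \<in> GF p\<close> by (simp add: descend_smult)
  qed
  have "inj_on (descend E) D" using D_GF_q D_faithful by (rule inj_on_descend)
  then show "card (descend E ` D) = p ^ k" using assms(7) by (simp add: card_image)
qed

end

section \<open>The codes of a quadratic form\<close>

locale quadratic_form_codes = descent p L TY m N \<theta>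
  for p L :: nat and TY :: "'f::{field,finite} itself" and m N :: nat and \<theta> :: 'f +
  fixes m1 m2 :: nat and Q :: "'f \<Rightarrow> 'f" and e lam :: "nat \<Rightarrow> 'f" and r :: nat
  assumes m1_pos: "m1 \<ge> 1" and m2_pos: "m2 \<ge> 1"
    and m1_dvd: "m * m1 dvd L" and m2_dvd: "m * m2 dvd L"
    and Q_diag: "qf_diagonal (p ^ m) m1 Q e lam r"
    and r_le: "r \<le> m1"
    and Q_nonzero: "\<exists>x\<in>GF ((p ^ m) ^ m1). Q x \<noteq> 0"
begin

abbreviation Fq :: "'f set" where "Fq \<equiv> GF q"
abbreviation X :: "'f set" where "X \<equiv> GF (q ^ m1)"
abbreviation Y :: "'f set" where "Y \<equiv> GF (q ^ m2)"

abbreviation coords :: "(nat \<Rightarrow> 'f) \<Rightarrow> 'f" where "coords v \<equiv> (\<Sum>i<m1. v i * e i)"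

abbreviation "\<Delta> \<equiv> (\<Prod>i<r. lam i)"

lemma coords_bij: "bij_betw coords (PiE {..<m1} (\<lambda>_. GF q)) X"
  using Q_diag unfolding qf_diagonal_def by blast

lemma lam_GFq_star: "i < r \<Longrightarrow> lam i \<in> GF q \<and> lam i \<noteq> 0"
  using Q_diag unfolding qf_diagonal_def by blast

lemma Q_coords: "v \<in> PiE {..<m1} (\<lambda>_. GF q) \<Longrightarrow> Q (coords v) = (\<Sum>i<r. lam i * v i ^ 2)"
  using Q_diag unfolding qf_diagonal_def by blast

lemma Y_eq: "Y = GF (p ^ (m * m2))"
  by (simp only: power_mult)

lemma card_X: "card X = q ^ m1" and card_Y: "card Y = q ^ m2"
  using card_GF[OF m1_dvd] card_GF[OF m2_dvd] by (simp_all add: power_mult)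

lemma GF_q_subset_Y: "GF q \<subseteq> Y"
  using GF_subset_GF_power[of q m2] .

lemma zero_in_X: "(0::'f) \<in> X" and zero_in_Y: "(0::'f) \<in> Y"
  using GF_zero[of "m * m1"] GF_zero[of "m * m2"] by (simp_all add: power_mult)

lemma Q_in_GF_q: "x \<in> X \<Longrightarrow> Q x \<in> GF q"
proof -
  assume "x \<in> X"
  then obtain v where v: "v \<in> PiE {..<m1} (\<lambda>_. GF q)" "x = coords v"
    using coords_bij by (auto simp: bij_betw_def)
  have "(\<Sum>i<r. lam i * v i ^ 2) \<in> GF q"
    using lam_GFq_star v(1) r_le by (intro GF_sum GF_mult GF_power) (auto simp: PiE_iff)
  then show ?thesis using Q_coords[OF v(1)] v(2) by simp
qed

lemma Q_zero: "Q 0 = 0"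
proof -
  have "(\<lambda>i. if i < m1 then 0 else undefined) \<in> PiE {..<m1} (\<lambda>_. GF q :: 'f set)"
    by (auto simp: PiE_iff extensional_def)
  from Q_coords[OF this] show ?thesis using r_le by simp
qed

lemma Delta_GFq_star: "\<Delta> \<in> GF q" "\<Delta> \<noteq> 0"
  using lam_GFq_star by (auto intro: GF_prod)

definition Q_count :: "'f \<Rightarrow> nat" where "Q_count t = card {x\<in>X. Q x = t}"

text \<open>In the coordinates v, Q x = t is a diagonal equation in r variables; the remaining
  m1 - r coordinates are free.\<close>

lemma Q_count_eq_diag_count: "Q_count t = q ^ (m1 - r) * diag_count lam r t"
proof -
  let ?P = "PiE {..<m1} (\<lambda>_. GF q :: 'f set)"
  let ?lam' = "\<lambda>i. if i < r then lam i else 0"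
  have sum_lam': "(\<Sum>i<m1. ?lam' i * v i ^ 2) = (\<Sum>i<r. lam i * v i ^ 2)" for v :: "nat \<Rightarrow> 'f"
  proof -
    have "(\<Sum>i<m1. ?lam' i * v i ^ 2) = (\<Sum>i<r. ?lam' i * v i ^ 2)"
      using r_le by (intro sum.mono_neutral_right) auto
    then show ?thesis by simp
  qed
  have image: "coords ` {v\<in>?P. (\<Sum>i<m1. ?lam' i * v i ^ 2) = t} = {x\<in>X. Q x = t}"
  proof (intro equalityI subsetI)
    fix x assume "x \<in> coords ` {v\<in>?P. (\<Sum>i<m1. ?lam' i * v i ^ 2) = t}"
    then show "x \<in> {x\<in>X. Q x = t}" using Q_coords sum_lam' coords_bij by (auto simp: bij_betw_def)
  next
    fix x assume x: "x \<in> {x\<in>X. Q x = t}"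
    then obtain v where "v \<in> ?P" "x = coords v" using coords_bij by (auto simp: bij_betw_def)
    then show "x \<in> coords ` {v\<in>?P. (\<Sum>i<m1. ?lam' i * v i ^ 2) = t}"
      using x Q_coords sum_lam' by auto
  qed
  have "inj_on coords {v\<in>?P. (\<Sum>i<m1. ?lam' i * v i ^ 2) = t}"
    using coords_bij by (auto simp: bij_betw_def intro: inj_on_subset)
  then have "Q_count t = diag_count ?lam' m1 t"
    unfolding Q_count_def diag_count_def image[symmetric] by (rule card_image)
  also have "\<dots> = diag_count ?lam' (r + (m1 - r)) t" using r_le by simp
  also have "\<dots> = q ^ (m1 - r) * diag_count ?lam' r t"
    by (rule diag_count_extend_zero) simp
  also have "diag_count ?lam' r t = diag_count lam r t"
    unfolding diag_count_def by (intro arg_cong[where f = card] Collect_cong sum.cong) auto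
  finally show ?thesis .
qed

lemma Q_count_even:
  assumes "even r" and "t \<in> GF q"
  shows "int q * int (Q_count t)
           = int q ^ (m1 - r) * (int q ^ r + nu t * int q ^ (r div 2) * eta q ((-1) ^ (r div 2) * \<Delta>))"
proof -
  have "int q * int (Q_count t) = int q ^ (m1 - r) * (int q * int (diag_count lam r t))"
    unfolding Q_count_eq_diag_count by (simp only: of_nat_mult of_nat_power mult.left_commute)
  also have "int q * int (diag_count lam r t)
      = int q ^ r + nu t * int q ^ (r div 2) * eta q ((-1) ^ (r div 2) * \<Delta>)"
    using diag_count_formula[of r lam t] lam_GFq_star assms by simp
  finally show ?thesis .
qed

lemma Q_count_odd:
  assumes "odd r" and "t \<in> GF q"
  shows "int (Q_count t)
           = int q ^ (m1 - r) * (int q ^ (r - 1) + int q ^ (r div 2) * eta q ((-1) ^ (r div 2) * \<Delta> * t))"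
  using diag_count_formula[of r lam t] lam_GFq_star assms
  by (simp add: Q_count_eq_diag_count)

definition word :: "'f \<Rightarrow> 'f \<Rightarrow> 'f \<Rightarrow> 'f \<times> 'f \<Rightarrow> 'f" where
  "word a b c = (\<lambda>(x, y). a * Q x + tr q m2 (b * y) + c)"

definition zeros :: "'f \<Rightarrow> 'f \<Rightarrow> 'f \<Rightarrow> nat" where
  "zeros a b c = card {z\<in>X \<times> Y. word a b c z = 0}"

lemma word_in_GF_q:
  assumes "a \<in> GF q" "b \<in> Y" "c \<in> GF q" "z \<in> X \<times> Y"
  shows "word a b c z \<in> GF q"
  using assms tr_in_GF[of _ m m2] Q_in_GF_q
  by (auto simp: word_def intro!: GF_add GF_mult)

lemma word_add: "word a b c z + word a' b' c' z = word (a + a') (b + b') (c + c') z"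
  using tr_add[of m m2] by (auto simp: word_def algebra_simps split: prod.splits)

lemma word_diff: "word a b c z - word a' b' c' z = word (a - a') (b - b') (c - c') z"
  using tr_diff[of m m2] by (auto simp: word_def algebra_simps split: prod.splits)

lemma word_smult:
  assumes "s \<in> GF q"
  shows "s * word a b c z = word (s * a) (s * b) (s * c) z"
proof -
  have "s * tr q m2 (b * y) = tr q m2 (s * b * y)" for y
    using tr_smult[OF assms, of m2 "b * y"] by (simp add: mult.assoc)
  then show ?thesis by (auto simp: word_def algebra_simps split: prod.splits)
qed

lemma word_zero_zero: "word a b 0 (0, 0) = 0"
  using Q_zero p_ge_2 by (simp add: word_def)

lemma zeros_le: "zeros a b c \<le> q ^ m1 * q ^ m2"
proof -
  have "zeros a b c \<le> card (X \<times> Y)" unfolding zeros_def by (intro card_mono) auto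
  then show ?thesis using card_X card_Y by (simp add: card_cartesian_product)
qed

lemma zeros_eq_sum: "zeros a b c = (\<Sum>x\<in>X. card {y\<in>Y. word a b c (x, y) = 0})"
proof -
  have "{z\<in>X \<times> Y. word a b c z = 0} = (SIGMA x:X. {y\<in>Y. word a b c (x, y) = 0})" by auto
  then show ?thesis unfolding zeros_def by (simp add: card_SigmaI)
qed

lemma zeros_b_nonzero:
  assumes a: "a \<in> GF q" and b: "b \<in> Y" "b \<noteq> 0" and c: "c \<in> GF q"
  shows "zeros a b c = q ^ m1 * q ^ (m2 - 1)"
proof -
  have "card {y\<in>Y. word a b c (x, y) = 0} = q ^ (m2 - 1)" if x: "x \<in> X" for x
  proof -
    define v where "v = - (a * Q x + c)"
    have v: "v \<in> GF q" unfolding v_def using a c Q_in_GF_q[OF x] by (intro GF_uminus GF_add GF_mult)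
    have "card {y\<in>Y. word a b c (x, y) = 0} = card ((\<lambda>y. b * y) ` {y\<in>Y. tr q m2 (b * y) = v})"
      by (rule card_image[symmetric, THEN trans])
        (use b in \<open>auto simp: inj_on_def word_def v_def algebra_simps eq_neg_iff_add_eq_0\<close>)
    also have "(\<lambda>y. b * y) ` {y\<in>Y. tr q m2 (b * y) = v} = {z\<in>Y. tr q m2 z = v}"
    proof (intro equalityI subsetI)
      fix z :: 'f assume "z \<in> {z\<in>Y. tr q m2 z = v}"
      then have "z / b \<in> {y\<in>Y. tr q m2 (b * y) = v}" "z = b * (z / b)" using b by (auto intro: GF_divide)
      then show "z \<in> (\<lambda>y. b * y) ` {y\<in>Y. tr q m2 (b * y) = v}" by blast
    qed (use b in \<open>auto intro: GF_mult\<close>)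
    also have "card \<dots> = q ^ (m2 - 1)" using card_tr_fibre[OF m_pos m2_pos m2_dvd v] .
    finally show ?thesis .
  qed
  then show ?thesis using card_X by (simp add: zeros_eq_sum)
qed

lemma zeros_b_zero: "zeros a 0 c = q ^ m2 * card {x\<in>X. a * Q x + c = 0}"
proof -
  have "zeros a 0 c = (\<Sum>x\<in>X. if a * Q x + c = 0 then q ^ m2 else 0)"
    unfolding zeros_eq_sum
  proof (rule sum.cong)
    fix x
    have "word a 0 c (x, y) = a * Q x + c" for y using p_ge_2 by (simp add: word_def)
    then show "card {y\<in>Y. word a 0 c (x, y) = 0} = (if a * Q x + c = 0 then q ^ m2 else 0)"
      using card_Y by simp
  qed simp
  also have "\<dots> = q ^ m2 * card {x\<in>X. a * Q x + c = 0}"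
    by (simp add: sum.If_cases Int_def)
  finally show ?thesis .
qed

lemma zeros_0_0_0: "zeros 0 0 0 = q ^ m1 * q ^ m2"
  using zeros_b_zero[of 0 0] card_X by simp

lemma zeros_0_0_nonzero: "c \<noteq> 0 \<Longrightarrow> zeros 0 0 c = 0"
  using zeros_b_zero[of 0 c] by simp

lemma zeros_a_nonzero_0:
  assumes "a \<in> GF q" "a \<noteq> 0"
  shows "zeros a 0 c = q ^ m2 * Q_count (- c / a)"
proof -
  have "{x\<in>X. a * Q x + c = 0} = {x\<in>X. Q x = - c / a}"
    using assms by (auto simp: field_simps eq_neg_iff_add_eq_0)
  then show ?thesis by (simp add: zeros_b_zero Q_count_def)
qed

lemma Q_count_less:
  assumes "t \<in> GF q"
  shows "Q_count t < q ^ m1"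
proof -
  obtain x where x: "x \<in> X" "Q x \<noteq> t"
  proof (cases "t = 0")
    case True
    then show ?thesis using Q_nonzero that by (auto simp: power_mult)
  next
    case False
    then show ?thesis using that[of 0] Q_zero zero_in_X by auto
  qed
  then have "{x\<in>X. Q x = t} \<subset> X" by auto
  then show ?thesis unfolding Q_count_def using card_X psubset_card_mono[of X] by simp
qed

lemma zeros_less:
  assumes a: "a \<in> GF q" and b: "b \<in> Y" and c: "c \<in> GF q" and nz: "(a, b, c) \<noteq> (0, 0, 0)"
  shows "zeros a b c < q ^ m1 * q ^ m2"
proof (cases "b = 0")
  case False
  have "q ^ (m2 - 1) < q ^ m2" using q_ge_3 m2_pos by (intro power_strict_increasing) auto
  then show ?thesis using zeros_b_nonzero[OF a b False c] q_ge_3 p_ge_2 by simp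
next
  case True
  show ?thesis
  proof (cases "a = 0")
    case True
    then show ?thesis using zeros_0_0_nonzero nz \<open>b = 0\<close> q_ge_3 p_ge_2 by simp
  next
    case False
    have "- c / a \<in> GF q" using a c by (intro GF_divide GF_uminus)
    then show ?thesis
      using zeros_a_nonzero_0[OF a False] Q_count_less q_ge_3 p_ge_2 True by simp
  qed
qed

lemma word_params_unique:
  assumes "a \<in> GF q" "b \<in> Y" "c \<in> GF q" "a' \<in> GF q" "b' \<in> Y" "c' \<in> GF q"
    and eq: "\<And>z. z \<in> X \<times> Y \<Longrightarrow> word a b c z = word a' b' c' z"
  shows "(a, b, c) = (a', b', c')"
proof (rule ccontr)
  assume "(a, b, c) \<noteq> (a', b', c')"
  then have nz: "(a - a', b - b', c - c') \<noteq> (0, 0, 0)" by auto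
  have "word (a - a') (b - b') (c - c') z = 0" if "z \<in> X \<times> Y" for z
    using eq[OF that] word_diff[of a b c z a' b' c'] by simp
  then have "{z\<in>X \<times> Y. word (a - a') (b - b') (c - c') z = 0} = X \<times> Y" by auto
  then have "zeros (a - a') (b - b') (c - c') = q ^ m1 * q ^ m2"
    using card_X card_Y by (simp add: zeros_def card_cartesian_product)
  moreover have "a - a' \<in> GF q" "b - b' \<in> Y" "c - c' \<in> GF q"
    using assms(1-6) by (auto simp: Y_eq intro: GF_diff)
  ultimately show False using zeros_less[OF _ _ _ nz] by simp
qed

text \<open>Both codes are descended from codes of words over GF q, indexed by parameter sets P;
  C_Q is the subcode c = 0 punctured at the coordinate (0, 0), where all its words vanish.\<close>

definition words :: "('f \<times> 'f \<times> 'f) set \<Rightarrow> ('f \<times> 'f \<Rightarrow> 'f) set" where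
  "words P = (\<lambda>(a, b, c). word a b c) ` P"

lemma code_C_eq: "code_C p m q m1 m2 N \<theta> Q = descend (X \<times> Y - {(0, 0)}) ` words (GF q \<times> Y \<times> {0})"
proof -
  have dom: "GF q \<times> Y \<times> {0} = (\<lambda>(a, b). (a, b, 0::'f)) ` (GF q \<times> Y)" by auto
  show ?thesis
    unfolding code_C_def words_def dom image_image
    by (rule image_cong) (auto simp: descend_def word_def pos_C_def fun_eq_iff)
qed

lemma code_C'_eq: "code_C' p m q m1 m2 N \<theta> Q = descend (X \<times> Y) ` words (GF q \<times> Y \<times> GF q)"
  unfolding code_C'_def words_def image_image
  by (rule image_cong) (auto simp: descend_def word_def pos_C'_def fun_eq_iff)

lemma in_words_iff: "w \<in> words P \<longleftrightarrow> (\<exists>a b c. (a, b, c) \<in> P \<and> w = word a b c)"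
  unfolding words_def by (auto simp: image_iff) (metis case_prod_conv)

lemma card_nonzeros_word:
  assumes E: "X \<times> Y - {(0, 0)} \<subseteq> E" "E \<subseteq> X \<times> Y" and c: "(0, 0) \<notin> E \<Longrightarrow> c = 0"
  shows "card {z\<in>E. word a b c z \<noteq> 0} = q ^ m1 * q ^ m2 - zeros a b c"
proof -
  have "{z\<in>E. word a b c z \<noteq> 0} = X \<times> Y - {z\<in>X \<times> Y. word a b c z = 0}"
    using E c word_zero_zero zero_in_X zero_in_Y by auto
  then show ?thesis
    using card_X card_Y by (simp add: zeros_def card_Diff_subset card_cartesian_product)
qed

lemma word_eq_on_imp_params_eq:
  assumes E: "X \<times> Y - {(0, 0)} \<subseteq> E"
    and abc: "a \<in> GF q" "b \<in> Y" "c \<in> GF q" "(0, 0) \<notin> E \<Longrightarrow> c = 0"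
    and abc': "a' \<in> GF q" "b' \<in> Y" "c' \<in> GF q" "(0, 0) \<notin> E \<Longrightarrow> c' = 0"
    and eq: "\<And>z. z \<in> E \<Longrightarrow> word a b c z = word a' b' c' z"
  shows "(a, b, c) = (a', b', c')"
proof (rule word_params_unique[OF abc(1-3) abc'(1-3)])
  fix z assume "z \<in> X \<times> Y"
  then show "word a b c z = word a' b' c' z"
    using E eq abc(4) abc'(4) word_zero_zero by (cases "z \<in> E") auto
qed

lemma inj_on_word:
  assumes "X \<times> Y - {(0, 0)} \<subseteq> E" and "P \<subseteq> GF q \<times> Y \<times> GF q"
    and "\<And>a b c. (a, b, c) \<in> P \<Longrightarrow> (0, 0) \<notin> E \<Longrightarrow> c = 0"
  shows "inj_on (\<lambda>(a, b, c). word a b c) P"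
proof (rule inj_onI)
  fix \<pi> \<pi>' assume "\<pi> \<in> P" "\<pi>' \<in> P"
    and eq: "(\<lambda>(a, b, c). word a b c) \<pi> = (\<lambda>(a, b, c). word a b c) \<pi>'"
  then obtain a b c a' b' c' where abc: "\<pi> = (a, b, c)" "\<pi>' = (a', b', c')"
    "(a, b, c) \<in> P" "(a', b', c') \<in> P" "word a b c = word a' b' c'"
    by (cases \<pi>, cases \<pi>') auto
  have "(a, b, c) = (a', b', c')"
    by (rule word_eq_on_imp_params_eq[OF assms(1)]) (use abc assms(2,3) in auto)
  then show "\<pi> = \<pi>'" using abc by simp
qed

lemma words_eq_on_imp_eq:
  assumes E: "X \<times> Y - {(0, 0)} \<subseteq> E" and P: "P \<subseteq> GF q \<times> Y \<times> GF q"
    and punct: "\<And>a b c. (a, b, c) \<in> P \<Longrightarrow> (0, 0) \<notin> E \<Longrightarrow> c = 0"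
    and ww': "w \<in> words P" "w' \<in> words P" and eq: "\<And>z. z \<in> E \<Longrightarrow> w z = w' z"
  shows "w = w'"
proof -
  obtain a b c a' b' c' where abc: "(a, b, c) \<in> P" "(a', b', c') \<in> P" "w = word a b c" "w' = word a' b' c'"
    using ww' unfolding in_words_iff by blast
  then have "(a, b, c) = (a', b', c')"
    using P punct eq by (intro word_eq_on_imp_params_eq[OF E]) auto
  then show ?thesis using abc by simp
qed

lemma linear_code_words:
  assumes E: "X \<times> Y - {(0, 0)} \<subseteq> E" "E \<subseteq> X \<times> Y"
    and P: "P \<subseteq> GF q \<times> Y \<times> GF q" "(0, 0, 0) \<in> P"
    and P_add: "\<And>a b c a' b' c'. (a, b, c) \<in> P \<Longrightarrow> (a', b', c') \<in> P \<Longrightarrow>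
      (a + a', b + b', c + c') \<in> P"
    and P_smult: "\<And>s a b c. s \<in> GF p \<Longrightarrow> (a, b, c) \<in> P \<Longrightarrow> (s * a, s * b, s * c) \<in> P"
    and punct: "\<And>a b c. (a, b, c) \<in> P \<Longrightarrow> (0, 0) \<notin> E \<Longrightarrow> c = 0"
    and "card P = p ^ k"
  shows "linear_code p (E \<times> {..<K}) (card E * K) k (descend E ` words P)"
proof (rule linear_code_descend)
  show "finite E" using finite_subset[OF E(2)] by simp
  show "c x \<in> GF q" if "c \<in> words P" "x \<in> E" for c x
    using that E(2) P(1) by (auto simp: words_def intro: word_in_GF_q)
  show "(\<lambda>_. 0) \<in> words P"
    using P(2) p_ge_2 Q_zero by (auto simp: words_def word_def fun_eq_iff intro!: image_eqI[of _ _ "(0, 0, 0)"])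
  show "(\<lambda>x. w x + w' x) \<in> words P" if ww': "w \<in> words P" "w' \<in> words P" for w w'
  proof -
    obtain a b c a' b' c' where "(a, b, c) \<in> P" "(a', b', c') \<in> P" "w = word a b c" "w' = word a' b' c'"
      using ww' unfolding in_words_iff by blast
    moreover have "(\<lambda>x. word a b c x + word a' b' c' x) = word (a + a') (b + b') (c + c')"
      by (simp add: word_add fun_eq_iff)
    ultimately show ?thesis
      using P_add unfolding words_def by (auto intro!: image_eqI[of _ _ "(a + a', b + b', c + c')"])
  qed
  show "(\<lambda>x. s * w x) \<in> words P" if s: "s \<in> GF p" and w: "w \<in> words P" for s w
  proof -
    obtain a b c where "(a, b, c) \<in> P" "w = word a b c"
      using w unfolding in_words_iff by blast
    moreover have "(\<lambda>x. s * word a b c x) = word (s * a) (s * b) (s * c)"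
      using s GF_p_subset by (auto simp: word_smult fun_eq_iff)
    ultimately show ?thesis
      using P_smult[OF s] unfolding words_def by (auto intro!: image_eqI[of _ _ "(s * a, s * b, s * c)"])
  qed
  show "w = w'" if "w \<in> words P" "w' \<in> words P" "\<And>x. x \<in> E \<Longrightarrow> w x = w' x" for w w'
    using words_eq_on_imp_eq[OF E(1) P(1) punct that] .
  show "card (words P) = p ^ k"
    unfolding words_def using inj_on_word[OF E(1) P(1) punct] \<open>card P = p ^ k\<close> by (simp add: card_image)
qed

lemma card_params_C: "card (Fq \<times> Y \<times> {0}) = p ^ (m * (m2 + 1))"
proof -
  have "p ^ (m * (m2 + 1)) = q * q ^ m2" by (simp only: power_mult power_Suc Suc_eq_plus1[symmetric])
  then show ?thesis using card_GF_q card_Y by (simp add: card_cartesian_product)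
qed

lemma card_params_C': "card (Fq \<times> Y \<times> Fq) = p ^ (m * (m2 + 2))"
proof -
  have "p ^ (m * (m2 + 2)) = q * (q ^ m2 * q)"
    by (simp only: power_mult power_add power_one_right power2_eq_square mult.commute mult.left_commute)
  then show ?thesis using card_GF_q card_Y by (simp add: card_cartesian_product)
qed

lemma linear_code_C:
  "linear_code p (pos_C q m1 m2 N) ((q ^ (m1 + m2) - 1) * (q - 1) div N) (m * (m2 + 1))
     (code_C p m q m1 m2 N \<theta> Q)"
proof -
  let ?E = "X \<times> Y - {(0, 0)}"
  have "linear_code p (?E \<times> {..<K}) (card ?E * K) (m * (m2 + 1)) (descend ?E ` words (GF q \<times> Y \<times> {0}))"
    using zero_in_Y GF_q_subset_Y GF_p_subset card_params_C
    by (intro linear_code_words) (auto simp: Y_eq intro!: GF_add GF_mult)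
  moreover have "card ?E * K = (q ^ (m1 + m2) - 1) * (q - 1) div N"
    using card_X card_Y zero_in_X zero_in_Y div_mult_swap[OF N_dvd_q_minus_1]
    by (simp add: card_cartesian_product card_Diff_singleton power_add)
  ultimately show ?thesis by (simp add: code_C_eq pos_C_def)
qed

lemma linear_code_C':
  "linear_code p (pos_C' q m1 m2 N) (q ^ (m1 + m2) * (q - 1) div N) (m * (m2 + 2))
     (code_C' p m q m1 m2 N \<theta> Q)"
proof -
  have "linear_code p ((X \<times> Y) \<times> {..<K}) (card (X \<times> Y) * K) (m * (m2 + 2))
      (descend (X \<times> Y) ` words (GF q \<times> Y \<times> GF q))"
    using GF_q_subset_Y GF_p_subset card_params_C' zero_in_X zero_in_Y
    by (intro linear_code_words) (auto simp: Y_eq intro!: GF_add GF_mult)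
  moreover have "card (X \<times> Y) * K = q ^ (m1 + m2) * (q - 1) div N"
    using card_X card_Y div_mult_swap[OF N_dvd_q_minus_1]
    by (simp add: card_cartesian_product power_add)
  ultimately show ?thesis by (simp add: code_C'_eq pos_C'_def)
qed

subsection \<open>Weight distributions\<close>

definition weight :: "'f \<Rightarrow> 'f \<Rightarrow> 'f \<Rightarrow> real" where
  "weight a b c = real (descent_weight * (q ^ m1 * q ^ m2 - zeros a b c))"

lemma weight_distr_words:
  assumes E: "X \<times> Y - {(0, 0)} \<subseteq> E" "E \<subseteq> X \<times> Y"
    and P: "P \<subseteq> GF q \<times> Y \<times> GF q"
    and punct: "\<And>a b c. (a, b, c) \<in> P \<Longrightarrow> (0, 0) \<notin> E \<Longrightarrow> c = 0"
  shows "weight_distr (E \<times> {..<K}) (descend E ` words P)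
           = image_mset (\<lambda>(a, b, c). weight a b c) (mset_set P)"
proof -
  have finE: "finite E" using finite_subset[OF E(2)] by simp
  have GF: "w z \<in> GF q" if "w \<in> words P" "z \<in> E" for w z
    using that E(2) P by (auto simp: in_words_iff intro: word_in_GF_q)
  have inj_word: "inj_on (\<lambda>(a, b, c). word a b c) P" by (rule inj_on_word[OF E(1) P punct])
  have "inj_on (descend E) (words P)"
    using GF words_eq_on_imp_eq[OF E(1) P punct] by (rule inj_on_descend)
  then have "weight_distr (E \<times> {..<K}) (descend E ` words P)
      = image_mset (\<lambda>w. real (descent_weight * card {z\<in>E. w z \<noteq> 0})) (mset_set (words P))"
    using finE GF by (intro weight_distr_descend) (auto simp: words_def)
  also have "mset_set (words P) = image_mset (\<lambda>(a, b, c). word a b c) (mset_set P)"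
    unfolding words_def using image_mset_mset_set[OF inj_word] by simp
  also have "image_mset (\<lambda>w. real (descent_weight * card {z\<in>E. w z \<noteq> 0})) \<dots>
      = image_mset (\<lambda>(a, b, c). real (descent_weight * card {z\<in>E. word a b c z \<noteq> 0})) (mset_set P)"
    by (simp add: multiset.map_comp o_def split_def)
  also have "\<dots> = image_mset (\<lambda>(a, b, c). weight a b c) (mset_set P)"
    using E punct by (intro image_mset_cong) (auto simp: weight_def card_nonzeros_word)
  finally show ?thesis .
qed

lemma weight_distr_C:
  "weight_distr (pos_C q m1 m2 N) (code_C p m q m1 m2 N \<theta> Q)
     = image_mset (\<lambda>(a, b, c). weight a b c) (mset_set (Fq \<times> Y \<times> {0}))"
  unfolding code_C_eq pos_C_def using GF_q_subset_Y
  by (intro weight_distr_words) auto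

lemma weight_distr_C':
  "weight_distr (pos_C' q m1 m2 N) (code_C' p m q m1 m2 N \<theta> Q)
     = image_mset (\<lambda>(a, b, c). weight a b c) (mset_set (Fq \<times> Y \<times> Fq))"
  unfolding code_C'_eq pos_C'_def using zero_in_X zero_in_Y
  by (intro weight_distr_words) auto

abbreviation "weight_unit \<equiv> real (p - 1) / (real p * real N) * real q ^ (m1 + m2)"

lemma weight_eq:
  assumes "real (zeros a b c) = real q ^ m1 * real q ^ m2 * z / real q"
  shows "weight a b c = weight_unit * (real q - z)"
proof -
  have "weight a b c = real descent_weight * (real q ^ m1 * real q ^ m2 - real (zeros a b c))"
    using zeros_le[of a b c] by (simp add: weight_def of_nat_diff)
  also have "\<dots> = weight_unit * (real q - z)"
    unfolding real_descent_weight assms using q_ge_3 N_pos p_ge_2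
    by (simp add: field_simps power_add)
  finally show ?thesis .
qed

lemma weight_0_0_0: "weight 0 0 0 = 0"
  using zeros_0_0_0 by (simp add: weight_def)

lemma weight_b_nonzero:
  assumes "a \<in> Fq" "b \<in> Y" "b \<noteq> 0" "c \<in> Fq"
  shows "weight a b c = real (q - 1) * real (p - 1) / (real p * real N) * real q ^ (m1 + m2)"
proof -
  have "x ^ m1 * x ^ (m2 - 1) = x ^ m1 * x ^ m2 * 1 / x" if "x > 0" for x :: real
    using that m2_pos by (cases m2) auto
  from this[of "real q"] have "real (zeros a b c) = real q ^ m1 * real q ^ m2 * 1 / real q"
    using zeros_b_nonzero[OF assms] p_ge_2 by simp
  from weight_eq[OF this] show ?thesis using q_ge_3 by (simp add: of_nat_diff)
qed

lemma weight_0_0_nonzero: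
  "c \<noteq> 0 \<Longrightarrow> weight 0 0 c = real (p - 1) / (real p * real N) * real q ^ (m1 + m2 + 1)"
  using weight_eq[of 0 0 c 0] zeros_0_0_nonzero by simp

lemma weight_a_nonzero_even:
  assumes "even r" and a: "a \<in> Fq" "a \<noteq> 0" and c: "c \<in> Fq"
  shows "weight a 0 c = weight_unit * (real q - 1
           - real_of_int (nu (- c / a)) * real_of_int (eta q ((-1) ^ (r div 2) * \<Delta>)) / real q ^ (r div 2))"
proof -
  let ?t = "- c / a"
  have t: "?t \<in> Fq" using a c by (intro GF_divide GF_uminus)
  \<comment> \<open>stated for a variable x, so that the simplifier does not unfold q = p ^ m\<close>
  have normalise: "x ^ m2 * n = x ^ (m1 - r) * x ^ r * x ^ m2 * (1 + v * e / x ^ (r div 2)) / x"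
    if "x > 0" and "x * n = x ^ (m1 - r) * (x ^ r + v * x ^ (r div 2) * e)" for x n v e :: real
  proof -
    have r: "x ^ r = x ^ (r div 2) * x ^ (r div 2)"
      using \<open>even r\<close> by (metis dvd_mult_div_cancel mult_2 power_add)
    have n: "n = x ^ (m1 - r) * (x ^ r + v * x ^ (r div 2) * e) / x"
      using that by (simp add: field_simps)
    have "x ^ (r div 2) > 0" using that by simp
    then show ?thesis unfolding n r using that by (simp add: field_simps)
  qed
  have "real (zeros a 0 c) = real q ^ m2 * real (Q_count ?t)"
    using zeros_a_nonzero_0[OF a] by simp
  also have "\<dots> = real q ^ (m1 - r) * real q ^ r * real q ^ m2
      * (1 + real_of_int (nu ?t) * real_of_int (eta q ((-1) ^ (r div 2) * \<Delta>)) / real q ^ (r div 2)) / real q"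
    using p_ge_2 arg_cong[OF Q_count_even[OF \<open>even r\<close> t], of real_of_int]
    by (intro normalise) simp_all
  also have "real q ^ (m1 - r) * real q ^ r = real q ^ m1"
    using r_le by (simp add: power_add[symmetric])
  finally show ?thesis by (simp only: weight_eq) (simp add: algebra_simps)
qed

lemma weight_a_nonzero_odd:
  assumes "odd r" and a: "a \<in> Fq" "a \<noteq> 0" and c: "c \<in> Fq"
  shows "weight a 0 c = weight_unit * (real q - 1
           - real_of_int (eta q ((-1) ^ (r div 2) * \<Delta> * (- c / a))) / real q ^ (r div 2))"
proof -
  let ?t = "- c / a"
  have t: "?t \<in> Fq" using a c by (intro GF_divide GF_uminus)
  have normalise: "x ^ m2 * n = x ^ (m1 - r) * x ^ r * x ^ m2 * (1 + e / x ^ (r div 2)) / x"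
    if "x > 0" and "n = x ^ (m1 - r) * (x ^ (r - 1) + x ^ (r div 2) * e)" for x n e :: real
  proof -
    obtain s where s: "r = 2 * s + 1" using \<open>odd r\<close> oddE by blast
    have r: "x ^ r = x * (x ^ (r div 2) * x ^ (r div 2))" "x ^ (r - 1) = x ^ (r div 2) * x ^ (r div 2)"
      using s by (simp_all add: power_add[symmetric] mult_2)
    have "x ^ (r div 2) > 0" using that by simp
    then show ?thesis using that unfolding r by (simp add: field_simps)
  qed
  have "real (zeros a 0 c) = real q ^ m2 * real (Q_count ?t)"
    using zeros_a_nonzero_0[OF a] by simp
  also have "\<dots> = real q ^ (m1 - r) * real q ^ r * real q ^ m2
      * (1 + real_of_int (eta q ((-1) ^ (r div 2) * \<Delta> * ?t)) / real q ^ (r div 2)) / real q"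
    using p_ge_2 arg_cong[OF Q_count_odd[OF \<open>odd r\<close> t], of real_of_int]
    by (intro normalise) simp_all
  also have "real q ^ (m1 - r) * real q ^ r = real q ^ m1"
    using r_le by (simp add: power_add[symmetric])
  finally show ?thesis by (simp only: weight_eq) (simp add: algebra_simps)
qed

abbreviation eps_even :: real where "eps_even \<equiv> real_of_int (eta q ((-1) ^ (r div 2) * \<Delta>))"

lemma eps_even_eq:
  assumes "even r"
  shows "eps_even = real_of_int (eta (p ^ m) \<Delta>) * (-1) ^ ((p - 1) * m * r div 4)"
proof -
  obtain s where s: "r = 2 * s" using assms by blast
  obtain h where h: "p - 1 = 2 * h" using p_odd by (metis oddE add_diff_cancel_right')
  have "eta q ((-1) ^ (r div 2) * \<Delta>) = ((-1) ^ ((q - 1) div 2)) ^ s * eta q \<Delta>"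
    using eta_mult[OF GF_minus_one_power Delta_GFq_star(1)] eta_minus_one_power eta_minus_one s
    by (simp add: power_mult[symmetric])
  also have "((-1::int) ^ ((q - 1) div 2)) ^ s = (-1) ^ (h * m * s)"
    using even_half_pred_power[OF p_odd, of m] h
    by (simp add: power_mult[symmetric] minus_one_power_iff)
  also have "h * m * s = (p - 1) * m * r div 4" using h s by simp
  finally show ?thesis by simp
qed

lemma eta_Delta_cases: "eta q \<Delta> = 1 \<or> eta q \<Delta> = -1"
  using eta_range[of \<Delta>] Delta_GFq_star by auto

lemma weight_on_b_nonzero:
  "x \<in> Fq \<times> (Y - {0}) \<times> Fq \<Longrightarrow> (case x of (a, b, c) \<Rightarrow> weight a b c)
     = real (q - 1) * real (p - 1) / (real p * real N) * real q ^ (m1 + m2)"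
  using weight_b_nonzero[of "fst x" "fst (snd x)" "snd (snd x)"] by (simp add: split_beta mem_Times_iff)

lemma weight_on_0_0_nonzero:
  "x \<in> {0} \<times> {0} \<times> (Fq - {0}) \<Longrightarrow> (case x of (a, b, c) \<Rightarrow> weight a b c)
     = real (p - 1) / (real p * real N) * real q ^ (m1 + m2 + 1)"
  using weight_0_0_nonzero by auto

lemma weight_on_a_0_0_even:
  assumes "even r" and "x \<in> (Fq - {0}) \<times> {0} \<times> {0}"
  shows "(case x of (a, b, c) \<Rightarrow> weight a b c)
     = real (q - 1) * real (p - 1) / (real p * real N) * real q ^ (m1 + m2) * (1 - eps_even / real q ^ (r div 2))"
proof -
  obtain a where a: "x = (a, 0, 0)" "a \<in> Fq" "a \<noteq> 0" using assms(2) by auto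
  have "weight a 0 0 = weight_unit * (real q - 1 - (real q - 1) * eps_even / real q ^ (r div 2))"
    using weight_a_nonzero_even[OF assms(1) a(2,3), of 0] by (simp add: nu_def)
  also have "\<dots> = real (q - 1) * real (p - 1) / (real p * real N) * real q ^ (m1 + m2)
                    * (1 - eps_even / real q ^ (r div 2))"
    using q_ge_3 N_pos p_ge_2 by (simp add: of_nat_diff field_simps)
  finally show ?thesis using a(1) by simp
qed

lemma weight_on_a_0_c_even:
  assumes "even r" and "x \<in> (Fq - {0}) \<times> {0} \<times> (Fq - {0})"
  shows "(case x of (a, b, c) \<Rightarrow> weight a b c) = weight_unit * (real q - 1 + eps_even / real q ^ (r div 2))"
proof -
  obtain a c where ac: "x = (a, 0, c)" "a \<in> Fq" "a \<noteq> 0" "c \<in> Fq" "c \<noteq> 0" using assms(2) by auto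
  then show ?thesis using weight_a_nonzero_even[OF assms(1) ac(2-4)] by (simp add: nu_def)
qed

lemma weight_on_a_0_0_odd:
  assumes "odd r" and "x \<in> (Fq - {0}) \<times> {0} \<times> {0}"
  shows "(case x of (a, b, c) \<Rightarrow> weight a b c)
     = real (q - 1) * real (p - 1) / (real p * real N) * real q ^ (m1 + m2)"
proof -
  obtain a where a: "x = (a, 0, 0)" "a \<in> Fq" "a \<noteq> 0" using assms(2) by auto
  then show ?thesis using weight_a_nonzero_odd[OF assms(1) a(2,3), of 0] q_ge_3 by (simp add: of_nat_diff)
qed

lemma weight_on_eta_block:
  assumes "odd r"
    and "x \<in> {(a, b, c). a \<in> Fq - {0} \<and> b = (0::'f) \<and> c \<in> Fq - {0}
                 \<and> eta q ((-1) ^ (r div 2) * \<Delta> * (- c / a)) = \<epsilon>}"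
  shows "(case x of (a, b, c) \<Rightarrow> weight a b c)
     = weight_unit * (real q - 1 - real_of_int \<epsilon> / real q ^ ((r - 1) div 2))"
proof -
  obtain a c where ac: "x = (a, 0, c)" "a \<in> Fq" "a \<noteq> 0" "c \<in> Fq"
    "eta q ((-1) ^ (r div 2) * \<Delta> * (- c / a)) = \<epsilon>" using assms(2) by auto
  moreover have "(r - 1) div 2 = r div 2" using \<open>odd r\<close> by presburger
  ultimately show ?thesis using weight_a_nonzero_odd[OF assms(1) ac(2-4)] by simp
qed

lemma card_GFq_minus_zero: "card (Fq - {0}) = q - 1"
  using card_GF_q by (simp add: card_Diff_singleton)

lemma card_Y_minus_zero: "card (Y - {0}) = q ^ m2 - 1"
  using card_Y zero_in_Y by (simp add: card_Diff_singleton)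

lemma weight_distr_C_even:
  assumes "even r"
  shows "weight_distr (pos_C q m1 m2 N) (code_C p m q m1 m2 N \<theta> Q) =
    {#0#} + replicate_mset (q * (q ^ m2 - 1))
              (real (p - 1) * real (q - 1) / (real p * real N) * real q ^ (m1 + m2))
          + replicate_mset (q - 1)
              (real (p - 1) * real (q - 1) / (real p * real N) * real q ^ (m1 + m2)
                 * (1 - eps_even / real q ^ (r div 2)))"
proof -
  let ?w = "\<lambda>(a, b, c). weight a b c"
  let ?v = "real (q - 1) * real (p - 1) / (real p * real N) * real q ^ (m1 + m2)"
  let ?B = "Fq \<times> (Y - {0}) \<times> {0::'f}"
  let ?A = "(Fq - {0}) \<times> {0::'f} \<times> {0::'f}"
  have "image_mset ?w (mset_set (Fq \<times> Y \<times> {0}))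
      = replicate_mset (card {(0::'f, 0::'f, 0::'f)}) 0 + image_mset ?w (mset_set (?B \<union> ?A))"
    using zero_in_Y weight_0_0_0 by (intro image_mset_mset_set_block) auto
  also have "image_mset ?w (mset_set (?B \<union> ?A)) = replicate_mset (card ?B) ?v + image_mset ?w (mset_set ?A)"
    by (intro image_mset_mset_set_block weight_on_b_nonzero) auto
  also have "image_mset ?w (mset_set ?A) = replicate_mset (card ?A) (?v * (1 - eps_even / real q ^ (r div 2)))"
    by (intro image_mset_mset_set_const weight_on_a_0_0_even[OF assms]) auto
  finally show ?thesis
    unfolding weight_distr_C mult.commute[of "real (p - 1)" "real (q - 1)"]
    using card_GF_q card_Y_minus_zero card_GFq_minus_zero by (simp add: card_cartesian_product add.assoc)
qed

lemma weight_distr_C_odd: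
  assumes "odd r"
  shows "weight_distr (pos_C q m1 m2 N) (code_C p m q m1 m2 N \<theta> Q) =
    {#0#} + replicate_mset (q ^ (m2 + 1) - 1)
              (real (p - 1) * real (q - 1) / (real p * real N) * real q ^ (m1 + m2))"
proof -
  let ?w = "\<lambda>(a, b, c). weight a b c"
  let ?v = "real (q - 1) * real (p - 1) / (real p * real N) * real q ^ (m1 + m2)"
  let ?R = "Fq \<times> Y \<times> {0::'f} - {(0, 0, 0)}"
  have "image_mset ?w (mset_set (Fq \<times> Y \<times> {0})) = replicate_mset (card {(0::'f, 0::'f, 0::'f)}) 0 + image_mset ?w (mset_set ?R)"
    using zero_in_Y weight_0_0_0 by (intro image_mset_mset_set_block) auto
  also have "image_mset ?w (mset_set ?R) = replicate_mset (card ?R) ?v"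
  proof (rule image_mset_mset_set_const)
    fix x assume "x \<in> ?R"
    then have "x \<in> Fq \<times> (Y - {0}) \<times> Fq \<or> x \<in> (Fq - {0}) \<times> {0} \<times> {0}" by auto
    then show "?w x = ?v" using weight_on_b_nonzero weight_on_a_0_0_odd[OF assms] by blast
  qed
  finally show ?thesis
    unfolding weight_distr_C mult.commute[of "real (p - 1)" "real (q - 1)"]
    using card_GF_q card_Y zero_in_Y by (simp add: card_cartesian_product)
qed

lemma weight_distr_C'_even:
  assumes "even r"
  shows "weight_distr (pos_C' q m1 m2 N) (code_C' p m q m1 m2 N \<theta> Q) =
    {#0#} + replicate_mset (q - 1) (real (p - 1) / (real p * real N) * real q ^ (m1 + m2 + 1))
          + replicate_mset (q ^ 2 * (q ^ m2 - 1))
              (real (q - 1) * real (p - 1) / (real p * real N) * real q ^ (m1 + m2))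
          + replicate_mset (q - 1)
              (real (q - 1) * real (p - 1) / (real p * real N) * real q ^ (m1 + m2)
                 * (1 - eps_even / real q ^ (r div 2)))
          + replicate_mset ((q - 1) ^ 2)
              (real (p - 1) / (real p * real N) * real q ^ (m1 + m2)
                 * (real q - 1 + eps_even / real q ^ (r div 2)))"
proof -
  let ?w = "\<lambda>(a, b, c). weight a b c"
  let ?S1 = "Fq \<times> (Y - {0}) \<times> Fq"
  let ?S2 = "{0::'f} \<times> {0::'f} \<times> (Fq - {0})"
  let ?S3 = "(Fq - {0}) \<times> {0::'f} \<times> {0::'f}"
  let ?S4 = "(Fq - {0}) \<times> {0::'f} \<times> (Fq - {0})"
  have "image_mset ?w (mset_set (Fq \<times> Y \<times> Fq))
      = replicate_mset (card {(0::'f, 0::'f, 0::'f)}) 0 + image_mset ?w (mset_set (?S2 \<union> (?S1 \<union> (?S3 \<union> ?S4))))"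
    using zero_in_Y weight_0_0_0 by (intro image_mset_mset_set_block) auto
  also have "image_mset ?w (mset_set (?S2 \<union> (?S1 \<union> (?S3 \<union> ?S4))))
      = replicate_mset (card ?S2) (real (p - 1) / (real p * real N) * real q ^ (m1 + m2 + 1))
        + image_mset ?w (mset_set (?S1 \<union> (?S3 \<union> ?S4)))"
    by (intro image_mset_mset_set_block weight_on_0_0_nonzero) auto
  also have "image_mset ?w (mset_set (?S1 \<union> (?S3 \<union> ?S4)))
      = replicate_mset (card ?S1) (real (q - 1) * real (p - 1) / (real p * real N) * real q ^ (m1 + m2))
        + image_mset ?w (mset_set (?S3 \<union> ?S4))"
    by (intro image_mset_mset_set_block weight_on_b_nonzero) auto
  also have "image_mset ?w (mset_set (?S3 \<union> ?S4))
      = replicate_mset (card ?S3) (real (q - 1) * real (p - 1) / (real p * real N) * real q ^ (m1 + m2)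
                 * (1 - eps_even / real q ^ (r div 2)))
        + image_mset ?w (mset_set ?S4)"
    by (intro image_mset_mset_set_block weight_on_a_0_0_even[OF assms]) auto
  also have "image_mset ?w (mset_set ?S4)
      = replicate_mset (card ?S4) (weight_unit * (real q - 1 + eps_even / real q ^ (r div 2)))"
    by (intro image_mset_mset_set_const weight_on_a_0_c_even[OF assms]) auto
  also have "card ?S1 = q ^ 2 * (q ^ m2 - 1)"
    using card_GF_q card_Y_minus_zero by (simp add: card_cartesian_product power2_eq_square)
  also have "card ?S4 = (q - 1) ^ 2"
    using card_GFq_minus_zero by (simp add: card_cartesian_product power2_eq_square)
  finally show ?thesis
    unfolding weight_distr_C' using card_GFq_minus_zero by (simp add: card_cartesian_product add.assoc)
qed

lemma card_eta_block:
  assumes "\<epsilon> = 1 \<or> \<epsilon> = -1"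
  shows "card {(a, b, c). a \<in> Fq - {0} \<and> b = (0::'f) \<and> c \<in> Fq - {0}
             \<and> eta q ((-1) ^ (r div 2) * \<Delta> * (- c / a)) = \<epsilon>} = (q - 1) ^ 2 div 2"
proof -
  let ?\<kappa> = "(-1) ^ (r div 2) * \<Delta>"
  have \<kappa>: "?\<kappa> \<in> Fq" "?\<kappa> \<noteq> 0" using Delta_GFq_star by (auto intro: GF_mult GF_minus_one_power)
  have "card {(a, b, c). a \<in> Fq - {0} \<and> b = (0::'f) \<and> c \<in> Fq - {0} \<and> eta q (?\<kappa> * (- c / a)) = \<epsilon>}
      = card ((\<lambda>(a, c). (a, 0::'f, c)) ` (SIGMA a:GFq_star. {c\<in>GFq_star. eta q ((- ?\<kappa> / a) * c) = \<epsilon>}))"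
    by (rule arg_cong[where f = card]) (auto simp: GFq_star_def algebra_simps)
  also have "\<dots> = (\<Sum>a\<in>GFq_star. card {c\<in>GFq_star. eta q ((- ?\<kappa> / a) * c) = \<epsilon>})"
    by (subst card_image) (auto simp: inj_on_def card_SigmaI GFq_star_def)
  also have "\<dots> = (\<Sum>a\<in>GFq_star. (q - 1) div 2)"
    using \<kappa> assms by (intro sum.cong refl card_eta_scaled_eq) (auto simp: GFq_star_def intro: GF_divide GF_uminus)
  also have "\<dots> = (q - 1) * ((q - 1) div 2)" using card_GFq_star by simp
  also have "\<dots> = (q - 1) ^ 2 div 2"
    using two_mult_half_q_minus_1 by (metis div_mult_swap dvd_triv_left power2_eq_square)
  finally show ?thesis .
qed

lemma card_params_b_nonzero_or_c_zero:
  "card (Fq \<times> (Y - {0}) \<times> Fq \<union> (Fq - {0}) \<times> {0} \<times> {0}) = q ^ 2 * (q ^ m2 - 1) + q - 1"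
proof -
  have "card (Fq \<times> (Y - {0}) \<times> Fq \<union> (Fq - {0}) \<times> {0} \<times> {0})
      = card (Fq \<times> (Y - {0}) \<times> Fq) + card ((Fq - {0}) \<times> {0::'f} \<times> {0::'f})"
    by (rule card_Un_disjoint) auto
  then show ?thesis using card_GF_q card_Y_minus_zero card_GFq_minus_zero q_ge_3
    by (simp add: card_cartesian_product power2_eq_square mult.commute mult.left_commute)
qed

lemma params_C'_odd_split:
  assumes "\<epsilon> = 1 \<or> \<epsilon> = -1"
  shows "Fq \<times> Y \<times> Fq = {(0, 0, 0)} \<union> ({0} \<times> {0} \<times> (Fq - {0}) \<union> (Fq \<times> (Y - {0}) \<times> Fq
    \<union> (Fq - {0}) \<times> {0} \<times> {0} \<union>
      ({(a, b, c). a \<in> Fq - {0} \<and> b = 0 \<and> c \<in> Fq - {0} \<and> eta q ((-1) ^ (r div 2) * \<Delta> * (- c / a)) = \<epsilon>}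
     \<union> {(a, b, c). a \<in> Fq - {0} \<and> b = 0 \<and> c \<in> Fq - {0} \<and> eta q ((-1) ^ (r div 2) * \<Delta> * (- c / a)) = - \<epsilon>})))"
    (is "_ = ?rhs")
proof (intro equalityI subsetI)
  fix x assume x: "x \<in> Fq \<times> Y \<times> Fq"
  obtain a b c where abc: "x = (a, b, c)" by (cases x)
  show "x \<in> ?rhs"
  proof (cases "a \<noteq> 0 \<and> b = 0 \<and> c \<noteq> 0")
    case True
    then have "(-1) ^ (r div 2) * \<Delta> * (- c / a) \<noteq> 0" using Delta_GFq_star by simp
    then have "eta q ((-1) ^ (r div 2) * \<Delta> * (- c / a)) \<in> {-1, 1}"
      using eta_range eta_eq_0_iff by blast
    then show ?thesis using True x abc assms by auto
  qed (use x abc in auto)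
qed (use zero_in_Y in auto)

lemma weight_distr_C'_odd:
  assumes "odd r" and \<epsilon>: "\<epsilon> = 1 \<or> \<epsilon> = -1"
  shows "weight_distr (pos_C' q m1 m2 N) (code_C' p m q m1 m2 N \<theta> Q) =
    {#0#} + replicate_mset (q - 1) (real (p - 1) / (real p * real N) * real q ^ (m1 + m2 + 1))
          + replicate_mset (q ^ 2 * (q ^ m2 - 1) + q - 1)
              (real (q - 1) * real (p - 1) / (real p * real N) * real q ^ (m1 + m2))
          + replicate_mset ((q - 1) ^ 2 div 2)
              (real (p - 1) / (real p * real N) * real q ^ (m1 + m2)
                 * (real q - 1 - real_of_int \<epsilon> / real q ^ ((r - 1) div 2)))
          + replicate_mset ((q - 1) ^ 2 div 2)
              (real (p - 1) / (real p * real N) * real q ^ (m1 + m2)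
                 * (real q - 1 + real_of_int \<epsilon> / real q ^ ((r - 1) div 2)))"
proof -
  let ?w = "\<lambda>(a, b, c). weight a b c"
  let ?\<eta> = "\<lambda>a c. eta q ((-1) ^ (r div 2) * \<Delta> * (- c / a))"
  let ?S1 = "Fq \<times> (Y - {0}) \<times> Fq \<union> (Fq - {0}) \<times> {0::'f} \<times> {0::'f}"
  let ?S2 = "{0::'f} \<times> {0::'f} \<times> (Fq - {0})"
  let ?Sp = "{(a, b, c). a \<in> Fq - {0} \<and> b = (0::'f) \<and> c \<in> Fq - {0} \<and> ?\<eta> a c = \<epsilon>}"
  let ?Sm = "{(a, b, c). a \<in> Fq - {0} \<and> b = (0::'f) \<and> c \<in> Fq - {0} \<and> ?\<eta> a c = - \<epsilon>}"
  have fin: "finite ?Sp" "finite ?Sm" by (auto intro: finite_subset[of _ "Fq \<times> {0} \<times> Fq"])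
  have "image_mset ?w (mset_set (Fq \<times> Y \<times> Fq))
      = replicate_mset (card {(0::'f, 0::'f, 0::'f)}) 0 + image_mset ?w (mset_set (?S2 \<union> (?S1 \<union> (?Sp \<union> ?Sm))))"
    using weight_0_0_0 fin by (intro image_mset_mset_set_block params_C'_odd_split[OF \<epsilon>]) auto
  also have "image_mset ?w (mset_set (?S2 \<union> (?S1 \<union> (?Sp \<union> ?Sm))))
      = replicate_mset (card ?S2) (real (p - 1) / (real p * real N) * real q ^ (m1 + m2 + 1))
        + image_mset ?w (mset_set (?S1 \<union> (?Sp \<union> ?Sm)))"
    using fin by (intro image_mset_mset_set_block weight_on_0_0_nonzero) auto
  also have "image_mset ?w (mset_set (?S1 \<union> (?Sp \<union> ?Sm)))
      = replicate_mset (card ?S1) (real (q - 1) * real (p - 1) / (real p * real N) * real q ^ (m1 + m2))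
        + image_mset ?w (mset_set (?Sp \<union> ?Sm))"
    using fin
  proof (intro image_mset_mset_set_block)
    fix x assume "x \<in> ?S1"
    then show "?w x = real (q - 1) * real (p - 1) / (real p * real N) * real q ^ (m1 + m2)"
      using weight_on_b_nonzero weight_on_a_0_0_odd[OF \<open>odd r\<close>] by blast
  qed auto
  also have "image_mset ?w (mset_set (?Sp \<union> ?Sm))
      = replicate_mset (card ?Sp) (weight_unit * (real q - 1 - real_of_int \<epsilon> / real q ^ ((r - 1) div 2)))
        + image_mset ?w (mset_set ?Sm)"
    using fin \<epsilon> by (intro image_mset_mset_set_block weight_on_eta_block[OF \<open>odd r\<close>]) auto
  also have "image_mset ?w (mset_set ?Sm)
      = replicate_mset (card ?Sm) (weight_unit * (real q - 1 - real_of_int (- \<epsilon>) / real q ^ ((r - 1) div 2)))"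
    by (intro image_mset_mset_set_const weight_on_eta_block[OF \<open>odd r\<close>]) auto
  also have "card ?S1 = q ^ 2 * (q ^ m2 - 1) + q - 1" by (rule card_params_b_nonzero_or_c_zero)
  also have "card ?Sp = (q - 1) ^ 2 div 2" using card_eta_block \<epsilon> by simp
  also have "card ?Sm = (q - 1) ^ 2 div 2" using card_eta_block[of "- \<epsilon>"] \<epsilon> by auto
  finally show ?thesis
    unfolding weight_distr_C' using card_GFq_minus_zero by (simp add: card_cartesian_product add.assoc)
qed

end

theorem proposition1:
  fixes p m m1 m2 L N r :: nat
    and Q :: "'f::{field,finite} \<Rightarrow> 'f" and \<theta> :: 'f
    and e lam :: "nat \<Rightarrow> 'f"
  assumes p_prime: "prime p" and p_odd: "odd p"
    and m_pos: "m \<ge> 1" and m1_pos: "m1 \<ge> 1" and m2_pos: "m2 \<ge> 1"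
    and field_card: "card (UNIV :: 'f set) = p ^ L"
    and m1_dvd: "m * m1 dvd L" and m2_dvd: "m * m2 dvd L"
    and N_pos: "N > 0" and N_dvd: "N dvd p - 1"
    and N_coprime: "coprime N ((p ^ m - 1) div (p - 1))"
    and theta_in: "\<theta> \<in> GF (p ^ m)"
    and theta_root: "\<theta> ^ ((p ^ m - 1) div N) = 1"
    and theta_prim: "\<forall>k. 0 < k \<and> k < (p ^ m - 1) div N \<longrightarrow> \<theta> ^ k \<noteq> 1"
    and Q_qf: "is_quadratic_form (p ^ m) m1 Q"
    and Q_nonzero: "\<exists>x\<in>GF ((p ^ m) ^ m1). Q x \<noteq> 0"
    and r_def: "r = qf_rank (p ^ m) m1 Q"
    and Q_diag: "qf_diagonal (p ^ m) m1 Q e lam r"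
  defines "q \<equiv> p ^ m"
    and "M \<equiv> m1 + m2"
    and "eps \<equiv> real_of_int (eta (p ^ m) (\<Prod>i<r. lam i)) *
               (if even r then (-1) ^ ((p - 1) * m * r div 4) else (-1) ^ ((p - 1) * m * (r + 1) div 4))"
  shows
    "linear_code p (pos_C q m1 m2 N) ((q ^ M - 1) * (q - 1) div N) (m * (m2 + 1))
        (code_C p m q m1 m2 N \<theta> Q) \<and>
     (even r \<longrightarrow>
        weight_distr (pos_C q m1 m2 N) (code_C p m q m1 m2 N \<theta> Q) =
          {#0#}
          + replicate_mset (q * (q ^ m2 - 1))
              (real (p - 1) * real (q - 1) / (real p * real N) * real q ^ M)
          + replicate_mset (q - 1)
              (real (p - 1) * real (q - 1) / (real p * real N) * real q ^ M
                 * (1 - eps / real q ^ (r div 2)))) \<and>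
     (odd r \<longrightarrow>
        weight_distr (pos_C q m1 m2 N) (code_C p m q m1 m2 N \<theta> Q) =
          {#0#}
          + replicate_mset (q ^ (m2 + 1) - 1)
              (real (p - 1) * real (q - 1) / (real p * real N) * real q ^ M)) \<and>
     linear_code p (pos_C' q m1 m2 N) (q ^ M * (q - 1) div N) (m * (m2 + 2))
        (code_C' p m q m1 m2 N \<theta> Q) \<and>
     (even r \<longrightarrow>
        weight_distr (pos_C' q m1 m2 N) (code_C' p m q m1 m2 N \<theta> Q) =
          {#0#}
          + replicate_mset (q - 1) (real (p - 1) / (real p * real N) * real q ^ (M + 1))
          + replicate_mset (q ^ 2 * (q ^ m2 - 1))
              (real (q - 1) * real (p - 1) / (real p * real N) * real q ^ M)
          + replicate_mset (q - 1)
              (real (q - 1) * real (p - 1) / (real p * real N) * real q ^ M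
                 * (1 - eps / real q ^ (r div 2)))
          + replicate_mset ((q - 1) ^ 2)
              (real (p - 1) / (real p * real N) * real q ^ M
                 * (real q - 1 + eps / real q ^ (r div 2)))) \<and>
     (odd r \<longrightarrow>
        weight_distr (pos_C' q m1 m2 N) (code_C' p m q m1 m2 N \<theta> Q) =
          {#0#}
          + replicate_mset (q - 1) (real (p - 1) / (real p * real N) * real q ^ (M + 1))
          + replicate_mset (q ^ 2 * (q ^ m2 - 1) + q - 1)
              (real (q - 1) * real (p - 1) / (real p * real N) * real q ^ M)
          + replicate_mset ((q - 1) ^ 2 div 2)
              (real (p - 1) / (real p * real N) * real q ^ M
                 * (real q - 1 - eps / real q ^ ((r - 1) div 2)))
          + replicate_mset ((q - 1) ^ 2 div 2)
              (real (p - 1) / (real p * real N) * real q ^ M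
                 * (real q - 1 + eps / real q ^ ((r - 1) div 2))))"
proof -
  have "r \<le> m1" unfolding r_def qf_rank_def by simp
  moreover have "m dvd L" using m1_dvd dvd_mult_left by blast
  ultimately interpret quadratic_form_codes p L "TYPE('f)" m N \<theta> m1 m2 Q e lam r
    using assms by unfold_locales auto
  have eps_even: "eps = eps_even" if "even r"
    using that eps_even_eq by (simp add: eps_def)
  \<comment> \<open>For odd r only eps = 1 or -1 matters: its sign swaps the two halves of the distribution.\<close>
  define \<sigma> where "\<sigma> = eta (p ^ m) \<Delta> * (-1) ^ ((p - 1) * m * (r + 1) div 4)"
  have eps_odd: "eps = real_of_int \<sigma>" if "odd r"
    using that by (simp add: eps_def \<sigma>_def)
  have "\<sigma> = 1 \<or> \<sigma> = -1"
    using eta_Delta_cases by (auto simp: \<sigma>_def minus_one_power_iff)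
  then show ?thesis
    unfolding q_def M_def
    using linear_code_C linear_code_C' weight_distr_C_even weight_distr_C_odd
      weight_distr_C'_even weight_distr_C'_odd eps_even eps_odd
    by (simp add: add.assoc)
qed

end
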